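(* Let $G$ be a finite group, $n = \exp(G)$, and $\sigma \in \mathrm{Gal}(\mathbb{Q}_n:\mathbb{Q})$. Suppose $\sigma$ fixes all but $4$ irreducible characters of $G$ and has exactly two orbits of size $2$ on $\mathrm{Irr}(G)$, so that the characters not fixed by $\sigma$ are $X = \{\chi_1, \sigma\chi_1, \chi_2, \sigma\chi_2\}$. If $x \in G$ represents a conjugacy class not fixed by $\sigma$, then $$|C_G(x)| = |\chi_1(x) - \sigma\chi_1(x)|^2 + |\chi_2(x) - \sigma\chi_2(x)|^2.$$
   Context: $\exp(G)$ is the exponent of $G$; $\mathbb{Q}_n=\mathbb{Q}(\zeta)$ with $\zeta$ a primitive $n$-th root of unity. For $\sigma\in\mathrm{Gal}(\mathbb{Q}_n:\mathbb{Q})$ with $\sigma(\zeta)=\zeta^{r}$ ($r$ coprime to $n$), $\sigma$ acts on $\mathrm{Irr}(G)$ (complex irreducible characters) by $(\sigma\chi)(g)=\sigma(\chi(g))$ and on conjugacy classes by $\sigma\cdot x^G=(x^{r})^G$; then $(\sigma\chi)(x)=\chi(\sigma\cdot x)$. *)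

theory Defs
  imports "HOL-Algebra.Group" "Jordan_Normal_Form.Matrix" "HOL-Computational_Algebra.Polynomial"
begin

definition group_exponent :: "('a, 'b) monoid_scheme \<Rightarrow> nat" where
  "group_exponent G = (LEAST n. 0 < n \<and> (\<forall>x\<in>carrier G. x [^]\<^bsub>G\<^esub> n = \<one>\<^bsub>G\<^esub>))"

definition prim_root :: "nat \<Rightarrow> complex" where
  "prim_root n = cis (2 * pi / real n)"

definition cyclotomic_field :: "nat \<Rightarrow> complex set" where
  "cyclotomic_field n = {poly p (prim_root n) | p. \<forall>i. coeff p i \<in> \<rat>}"

(* sigma is an element of Gal(Q_n : Q), i.e. a field automorphism of Q_n
   (it then automatically fixes Q); values outside Q_n are irrelevant *)
definition is_galois_auto :: "nat \<Rightarrow> (complex \<Rightarrow> complex) \<Rightarrow> bool" where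
  "is_galois_auto n \<sigma> \<longleftrightarrow>
     bij_betw \<sigma> (cyclotomic_field n) (cyclotomic_field n) \<and>
     (\<forall>a\<in>cyclotomic_field n. \<forall>b\<in>cyclotomic_field n.
        \<sigma> (a + b) = \<sigma> a + \<sigma> b \<and> \<sigma> (a * b) = \<sigma> a * \<sigma> b) \<and>
     \<sigma> 1 = 1"

definition mat_trace :: "complex mat \<Rightarrow> complex" where
  "mat_trace A = (\<Sum>i<dim_row A. A $$ (i, i))"

definition is_rep :: "('a, 'b) monoid_scheme \<Rightarrow> nat \<Rightarrow> ('a \<Rightarrow> complex mat) \<Rightarrow> bool" where
  "is_rep G d \<rho> \<longleftrightarrow>
     (\<forall>g\<in>carrier G. \<rho> g \<in> carrier_mat d d) \<and>
     \<rho> \<one>\<^bsub>G\<^esub> = 1\<^sub>m d \<and>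
     (\<forall>g\<in>carrier G. \<forall>h\<in>carrier G. \<rho> (g \<otimes>\<^bsub>G\<^esub> h) = \<rho> g * \<rho> h)"

definition is_subspace :: "nat \<Rightarrow> complex vec set \<Rightarrow> bool" where
  "is_subspace d W \<longleftrightarrow> W \<subseteq> carrier_vec d \<and> 0\<^sub>v d \<in> W \<and>
     (\<forall>v\<in>W. \<forall>w\<in>W. v + w \<in> W) \<and> (\<forall>c. \<forall>v\<in>W. c \<cdot>\<^sub>v v \<in> W)"

definition is_irred_rep :: "('a, 'b) monoid_scheme \<Rightarrow> nat \<Rightarrow> ('a \<Rightarrow> complex mat) \<Rightarrow> bool" where
  "is_irred_rep G d \<rho> \<longleftrightarrow> is_rep G d \<rho> \<and> 0 < d \<and>
     (\<forall>W. is_subspace d W \<and> (\<forall>g\<in>carrier G. \<forall>w\<in>W. \<rho> g *\<^sub>v w \<in> W)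
          \<longrightarrow> W = {0\<^sub>v d} \<or> W = carrier_vec d)"

definition character :: "('a, 'b) monoid_scheme \<Rightarrow> ('a \<Rightarrow> complex mat) \<Rightarrow> 'a \<Rightarrow> complex" where
  "character G \<rho> = (\<lambda>g. if g \<in> carrier G then mat_trace (\<rho> g) else 0)"

definition Irr :: "('a, 'b) monoid_scheme \<Rightarrow> ('a \<Rightarrow> complex) set" where
  "Irr G = {character G \<rho> | \<rho> d. is_irred_rep G d \<rho>}"

definition gal_act :: "('a, 'b) monoid_scheme \<Rightarrow> (complex \<Rightarrow> complex) \<Rightarrow> ('a \<Rightarrow> complex) \<Rightarrow> 'a \<Rightarrow> complex" where
  "gal_act G \<sigma> \<chi> = (\<lambda>g. if g \<in> carrier G then \<sigma> (\<chi> g) else 0)"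

definition conj_class :: "('a, 'b) monoid_scheme \<Rightarrow> 'a \<Rightarrow> 'a set" where
  "conj_class G x = {g \<otimes>\<^bsub>G\<^esub> x \<otimes>\<^bsub>G\<^esub> inv\<^bsub>G\<^esub> g | g. g \<in> carrier G}"

definition centralizer :: "('a, 'b) monoid_scheme \<Rightarrow> 'a \<Rightarrow> 'a set" where
  "centralizer G x = {g \<in> carrier G. g \<otimes>\<^bsub>G\<^esub> x = x \<otimes>\<^bsub>G\<^esub> g}"

end

theory Submission
  imports Defs "Jordan_Normal_Form.Spectral_Radius" "HOL-Algebra.Group_Action"
    "HOL-Algebra.Multiplicative_Group"
begin

(* The eigenvalues of rho(x) are n-th roots of unity, so sigma acts on character values by
   raising them to the r-th power: (sigma chi)(x) = chi(y) with y = x^r. Irreducible characters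
   also satisfy chi(x^-1) = cnj (chi x). Hence every sigma-fixed irreducible character takes the
   same value at x and y, and the second orthogonality relation
     sum over chi in Irr(G) of chi(x) * cnj (chi(x) - chi(y)) = |C_G(x)|
   (y is not conjugate to x) only involves the four characters that sigma moves. Since sigma
   swaps chi_i and sigma chi_i, their contributions pair up into |chi_i(x) - sigma chi_i(x)|^2.

   The orthogonality relation is obtained without a finite character table: a suitable
   combination of the class indicators of x and y and the characters moved by sigma is
   orthogonal to all irreducible characters, hence zero by completeness. Completeness and the
   first orthogonality relations are proved from Schur's lemma, using the regular
   representation and the fact that characters of reducible representations split. *)

lemma sum_lessThan_split:
  fixes f :: "nat \<Rightarrow> 'a::comm_monoid_add" and k d :: nat
  assumes "k \<le> d"
  shows "(\<Sum>l<d. f l) = (\<Sum>l<k. f l) + (\<Sum>l<d - k. f (l + k))"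
  using assms sum.atLeastLessThan_concat[of 0 k d f] sum.shift_bounds_nat_ivl[of f 0 k "d - k"]
  by (simp add: lessThan_atLeast0)

lemma index_mult_mat_sum:
  assumes "A \<in> carrier_mat n m" "B \<in> carrier_mat m p" "i < n" "j < p"
  shows "(A * B) $$ (i,j) = (\<Sum>l<m. A $$ (i,l) * B $$ (l,j))"
  using assms by (simp add: scalar_prod_def lessThan_atLeast0)

lemma mat_trace_mult_comm:
  assumes A: "A \<in> carrier_mat n m" and B: "B \<in> carrier_mat m n"
  shows "mat_trace (A * B) = mat_trace (B * A)"
proof -
  have "mat_trace (A * B) = (\<Sum>i<n. \<Sum>k<m. A $$ (i,k) * B $$ (k,i))"
    unfolding mat_trace_def using A B
    by (intro sum.cong refl) (auto simp: scalar_prod_def lessThan_atLeast0)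
  also have "\<dots> = (\<Sum>k<m. \<Sum>i<n. B $$ (k,i) * A $$ (i,k))"
    by (subst sum.swap) (simp add: mult.commute)
  also have "\<dots> = mat_trace (B * A)"
    unfolding mat_trace_def using A B
    by (intro sum.cong refl) (auto simp: scalar_prod_def lessThan_atLeast0)
  finally show ?thesis .
qed

lemma mat_trace_one [simp]: "mat_trace (1\<^sub>m n) = of_nat n"
  unfolding mat_trace_def by simp

lemma mat_trace_conj:
  assumes P: "P \<in> carrier_mat e d" and M: "M \<in> carrier_mat d d" and Q: "Q \<in> carrier_mat d e"
    and QP: "Q * P = 1\<^sub>m d"
  shows "mat_trace (P * M * Q) = mat_trace M"
proof -
  have "mat_trace (P * M * Q) = mat_trace (P * (M * Q))"
    using P M Q by (simp add: assoc_mult_mat[of _ e d _ d _ e])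
  also have "\<dots> = mat_trace (M * Q * P)"
    using P M Q by (subst mat_trace_mult_comm[of _ e d]) (auto simp: assoc_mult_mat[of _ d d _ e _ d])
  also have "M * Q * P = M"
    using P M Q QP by (simp add: assoc_mult_mat[of _ d d _ e _ d])
  finally show ?thesis .
qed

lemma mult_mat_unit_vec:
  fixes A :: "'a::comm_ring_1 mat"
  assumes "A \<in> carrier_mat n m" "j < m"
  shows "A *\<^sub>v unit_vec m j = col A j"
  using assms by (intro eq_vecI) auto

lemma mult_mat_zero_vec: "A \<in> carrier_mat n m \<Longrightarrow> A *\<^sub>v 0\<^sub>v m = (0\<^sub>v n :: 'a::comm_ring_1 vec)"
  by (intro eq_vecI) auto

lemma mat_eq_unit_vecI:
  fixes A B :: "'a::comm_ring_1 mat"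
  assumes A: "A \<in> carrier_mat n m" and B: "B \<in> carrier_mat n m"
    and eq: "\<And>j. j < m \<Longrightarrow> A *\<^sub>v unit_vec m j = B *\<^sub>v unit_vec m j"
  shows "A = B"
  using A B eq by (intro mat_col_eqI) (auto simp: mult_mat_unit_vec[symmetric])

lemma mat_inverse_dim_eq:
  fixes A B :: "complex mat"
  assumes "A \<in> carrier_mat e d" "B \<in> carrier_mat d e" "A * B = 1\<^sub>m e" "B * A = 1\<^sub>m d"
  shows "e = d"
  using mat_trace_mult_comm[OF assms(1,2)] assms(3,4) by simp

lemma mat_bij_imp_inverse:
  fixes A :: "'a::comm_ring_1 mat"
  assumes A: "A \<in> carrier_mat e d"
    and inj: "\<And>v w. v \<in> carrier_vec d \<Longrightarrow> w \<in> carrier_vec d \<Longrightarrow> A *\<^sub>v v = A *\<^sub>v w \<Longrightarrow> v = w"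
    and surj: "\<And>w. w \<in> carrier_vec e \<Longrightarrow> \<exists>v\<in>carrier_vec d. A *\<^sub>v v = w"
  obtains B where "B \<in> carrier_mat d e" "A * B = 1\<^sub>m e" "B * A = 1\<^sub>m d"
proof -
  define b where "b j = (SOME v. v \<in> carrier_vec d \<and> A *\<^sub>v v = unit_vec e j)" for j
  have b: "b j \<in> carrier_vec d \<and> A *\<^sub>v b j = unit_vec e j" for j
  proof -
    have "\<exists>v. v \<in> carrier_vec d \<and> A *\<^sub>v v = unit_vec e j" using surj[of "unit_vec e j"] by auto
    then show ?thesis unfolding b_def by (rule someI_ex)
  qed
  define B where "B = mat_of_cols d (map b [0..<e])"
  have B: "B \<in> carrier_mat d e" unfolding B_def using mat_of_cols_carrier(1) by fastforce
  have Bu: "B *\<^sub>v unit_vec e j = b j" if "j < e" for j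
    using that b[of j] unfolding mult_mat_unit_vec[OF B that] by (simp add: B_def)
  have AB: "A * B = 1\<^sub>m e"
    by (rule mat_eq_unit_vecI[of _ e e]) (use A B Bu b in \<open>auto simp: assoc_mult_mat_vec\<close>)
  have "B * A = 1\<^sub>m d"
  proof (rule mat_eq_unit_vecI[of _ d d])
    fix j assume "j < d"
    have "A *\<^sub>v ((B * A) *\<^sub>v unit_vec d j) = (A * B) *\<^sub>v (A *\<^sub>v unit_vec d j)"
      using A B by (simp add: assoc_mult_mat_vec)
    also have "\<dots> = A *\<^sub>v unit_vec d j" unfolding AB using A by simp
    finally show "(B * A) *\<^sub>v unit_vec d j = 1\<^sub>m d *\<^sub>v unit_vec d j"
      using A B by (auto intro: inj)
  qed (use A B in auto)
  with B AB show ?thesis by (rule that)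
qed

section \<open>Subspaces and adapted bases\<close>

lemma is_subspaceD:
  assumes "is_subspace d W"
  shows "W \<subseteq> carrier_vec d" "0\<^sub>v d \<in> W"
    "\<And>v w. v \<in> W \<Longrightarrow> w \<in> W \<Longrightarrow> v + w \<in> W" "\<And>c v. v \<in> W \<Longrightarrow> c \<cdot>\<^sub>v v \<in> W"
  using assms unfolding is_subspace_def by blast+

lemma is_subspace_carrier_vec: "is_subspace d (carrier_vec d)"
  unfolding is_subspace_def by auto

lemma is_subspace_mat_kernel:
  assumes A: "A \<in> carrier_mat e d"
  shows "is_subspace d {v \<in> carrier_vec d. A *\<^sub>v v = 0\<^sub>v e}"
  unfolding is_subspace_def
proof (intro conjI ballI allI)
  fix c x y assume x: "x \<in> {v \<in> carrier_vec d. A *\<^sub>v v = 0\<^sub>v e}" and y: "y \<in> {v \<in> carrier_vec d. A *\<^sub>v v = 0\<^sub>v e}"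
  show "x + y \<in> {v \<in> carrier_vec d. A *\<^sub>v v = 0\<^sub>v e}" using x y A by (auto simp: mult_add_distrib_mat_vec)
  show "c \<cdot>\<^sub>v x \<in> {v \<in> carrier_vec d. A *\<^sub>v v = 0\<^sub>v e}" using x A by (auto simp: mult_mat_vec)
qed (use A in auto)

lemma is_subspace_mat_image:
  assumes A: "A \<in> carrier_mat e d"
  shows "is_subspace e {A *\<^sub>v v | v. v \<in> carrier_vec d}"
  unfolding is_subspace_def
proof (intro conjI ballI allI)
  show "{A *\<^sub>v v |v. v \<in> carrier_vec d} \<subseteq> carrier_vec e" using A by auto
  show "0\<^sub>v e \<in> {A *\<^sub>v v |v. v \<in> carrier_vec d}" using A by (auto intro!: exI[of _ "0\<^sub>v d"])
  fix c x y assume "x \<in> {A *\<^sub>v v |v. v \<in> carrier_vec d}" "y \<in> {A *\<^sub>v v |v. v \<in> carrier_vec d}"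
  then obtain a b where "x = A *\<^sub>v a" "y = A *\<^sub>v b" "a \<in> carrier_vec d" "b \<in> carrier_vec d" by auto
  then show "x + y \<in> {A *\<^sub>v v |v. v \<in> carrier_vec d}"
    and "c \<cdot>\<^sub>v x \<in> {A *\<^sub>v v |v. v \<in> carrier_vec d}"
    using A by (auto simp: mult_add_distrib_mat_vec[symmetric] mult_mat_vec[symmetric]
        intro: exI[of _ "a + b"] exI[of _ "c \<cdot>\<^sub>v a"])
qed

lemma is_subspace_eigenspace:
  assumes M: "M \<in> carrier_mat d d"
  shows "is_subspace d {v \<in> carrier_vec d. M *\<^sub>v v = lam \<cdot>\<^sub>v v}"
  unfolding is_subspace_def
proof (intro conjI ballI allI)
  fix c x y assume x: "x \<in> {v \<in> carrier_vec d. M *\<^sub>v v = lam \<cdot>\<^sub>v v}" and y: "y \<in> {v \<in> carrier_vec d. M *\<^sub>v v = lam \<cdot>\<^sub>v v}"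
  show "x + y \<in> {v \<in> carrier_vec d. M *\<^sub>v v = lam \<cdot>\<^sub>v v}"
    using x y M by (auto simp: mult_add_distrib_mat_vec smult_add_distrib_vec)
  show "c \<cdot>\<^sub>v x \<in> {v \<in> carrier_vec d. M *\<^sub>v v = lam \<cdot>\<^sub>v v}"
    using x M by (auto simp: mult_mat_vec smult_smult_assoc mult.commute)
qed (use M in auto)

definition vec_lincomb :: "nat \<Rightarrow> complex vec list \<Rightarrow> (nat \<Rightarrow> complex) \<Rightarrow> complex vec" where
  "vec_lincomb d vs c = vec d (\<lambda>j. \<Sum>i<length vs. c i * vs ! i $ j)"

definition vecs_indep :: "nat \<Rightarrow> complex vec list \<Rightarrow> bool" where
  "vecs_indep d vs \<longleftrightarrow> set vs \<subseteq> carrier_vec d \<and>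
     (\<forall>c. vec_lincomb d vs c = 0\<^sub>v d \<longrightarrow> (\<forall>i<length vs. c i = 0))"

lemma vec_lincomb_carrier [simp]: "vec_lincomb d vs c \<in> carrier_vec d"
  and dim_vec_lincomb [simp]: "dim_vec (vec_lincomb d vs c) = d"
  unfolding vec_lincomb_def by simp_all

lemma vec_lincomb_Nil: "vec_lincomb d [] c = 0\<^sub>v d"
  unfolding vec_lincomb_def by auto

lemma vec_lincomb_Cons:
  assumes "v \<in> carrier_vec d"
  shows "vec_lincomb d (v # vs) c = c 0 \<cdot>\<^sub>v v + vec_lincomb d vs (\<lambda>i. c (Suc i))"
  by (rule eq_vecI)
    (use assms in \<open>auto simp del: sum.lessThan_Suc simp: vec_lincomb_def sum.lessThan_Suc_shift\<close>)

lemma vec_lincomb_snoc: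
  assumes "w \<in> carrier_vec d"
  shows "vec_lincomb d (vs @ [w]) c = vec_lincomb d vs c + c (length vs) \<cdot>\<^sub>v w"
  by (rule eq_vecI) (use assms in \<open>auto simp: vec_lincomb_def nth_append intro!: sum.cong\<close>)

lemma vec_lincomb_in_subspace:
  assumes W: "is_subspace d W" and vs: "set vs \<subseteq> W"
  shows "vec_lincomb d vs c \<in> W"
  using vs
proof (induction vs arbitrary: c)
  case Nil
  then show ?case using is_subspaceD(2)[OF W] by (simp add: vec_lincomb_Nil)
next
  case (Cons v vs)
  then have v: "v \<in> carrier_vec d" using is_subspaceD(1)[OF W] by auto
  then show ?case unfolding vec_lincomb_Cons[OF v] using Cons is_subspaceD(3,4)[OF W] by auto
qed

lemma mat_of_cols_mult_vec:
  assumes "set ws \<subseteq> carrier_vec d" and a: "a \<in> carrier_vec (length ws)"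
  shows "mat_of_cols d ws *\<^sub>v a = vec_lincomb d ws (\<lambda>i. a $ i)"
  by (rule eq_vecI) (use a in \<open>auto simp: vec_lincomb_def mat_of_cols_def scalar_prod_def
      lessThan_atLeast0 mult.commute intro!: sum.cong\<close>)

lemma vecs_indepD:
  "vecs_indep d vs \<Longrightarrow> vec_lincomb d vs c = 0\<^sub>v d \<Longrightarrow> i < length vs \<Longrightarrow> c i = 0"
  unfolding vecs_indep_def by blast

lemma vecs_indep_snoc:
  assumes ind: "vecs_indep d vs" and w: "w \<in> carrier_vec d" and nw: "w \<notin> range (vec_lincomb d vs)"
  shows "vecs_indep d (vs @ [w])"
  unfolding vecs_indep_def
proof (intro conjI allI impI)
  show "set (vs @ [w]) \<subseteq> carrier_vec d" using ind w unfolding vecs_indep_def by auto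
  fix c i assume eq: "vec_lincomb d (vs @ [w]) c = 0\<^sub>v d" and i: "i < length (vs @ [w])"
  let ?k = "length vs"
  have eq2: "vec_lincomb d vs c + c ?k \<cdot>\<^sub>v w = 0\<^sub>v d" using eq vec_lincomb_snoc[OF w] by simp
  have ck: "c ?k = 0"
  proof (rule ccontr)
    assume ck: "c ?k \<noteq> 0"
    have "w = vec_lincomb d vs (\<lambda>i. - c i / c ?k)"
    proof (rule eq_vecI)
      fix j assume "j < dim_vec (vec_lincomb d vs (\<lambda>i. - c i / c ?k))"
      then have j: "j < d" by simp
      have "(vec_lincomb d vs c + c ?k \<cdot>\<^sub>v w) $ j = 0" using eq2 j by simp
      then have "(\<Sum>i<?k. c i * vs ! i $ j) + c ?k * w $ j = 0"
        using j w by (simp add: vec_lincomb_def)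
      then have "w $ j = - (\<Sum>i<?k. c i * vs ! i $ j) / c ?k" using ck
        by (simp add: field_simps eq_neg_iff_add_eq_0)
      also have "\<dots> = (\<Sum>i<?k. - c i / c ?k * vs ! i $ j)"
        by (simp add: sum_divide_distrib sum_negf[symmetric])
      finally show "w $ j = vec_lincomb d vs (\<lambda>i. - c i / c ?k) $ j"
        using j by (simp add: vec_lincomb_def)
    qed (use w in auto)
    then show False using nw by auto
  qed
  have "0 \<cdot>\<^sub>v w = 0\<^sub>v d" using w by auto
  then have "vec_lincomb d vs c = 0\<^sub>v d" using eq2 ck by simp
  then have "\<forall>i<?k. c i = 0" using ind unfolding vecs_indep_def by blast
  then show "c i = 0" using ck i by (cases "i < ?k") (auto simp: less_Suc_eq)
qed

lemma vecs_indep_length: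
  assumes ind: "vecs_indep d vs"
  shows "length vs \<le> d"
proof (rule ccontr)
  let ?k = "length vs"
  assume "\<not> ?k \<le> d"
  then have kd: "d < ?k" by simp
  define A where "A = mat\<^sub>r ?k ?k (\<lambda>i. if i = ?k - 1 then 0\<^sub>v ?k else vec ?k (\<lambda>j. vs ! j $ i))"
  have "det A = 0" unfolding A_def by (rule det_row_0) (use kd in auto)
  moreover have A: "A \<in> carrier_mat ?k ?k" unfolding A_def by simp
  ultimately obtain v where v: "v \<in> carrier_vec ?k" "v \<noteq> 0\<^sub>v ?k" "A *\<^sub>v v = 0\<^sub>v ?k"
    using det_0_iff_vec_prod_zero_field by blast
  have "vec_lincomb d vs (\<lambda>i. v $ i) = 0\<^sub>v d"
  proof (rule eq_vecI)
    fix j assume "j < dim_vec (0\<^sub>v d :: complex vec)"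
    then have j: "j < d" by simp
    have "(A *\<^sub>v v) $ j = 0" using v(3) j kd by simp
    moreover have "(A *\<^sub>v v) $ j = (\<Sum>i<?k. vs ! i $ j * v $ i)"
      using j kd v(1) unfolding A_def by (auto simp: scalar_prod_def lessThan_atLeast0)
    ultimately show "vec_lincomb d vs (\<lambda>i. v $ i) $ j = 0\<^sub>v d $ j"
      using j by (simp add: vec_lincomb_def mult.commute)
  qed simp
  then have "\<forall>i<?k. v $ i = 0" using ind unfolding vecs_indep_def by blast
  then have "v = 0\<^sub>v ?k" using v(1) by (intro eq_vecI) auto
  then show False using v(2) by simp
qed

lemma vecs_indep_extend_spanning:
  assumes W: "is_subspace d W" and ind: "vecs_indep d vs" and sub: "set vs \<subseteq> W"
  shows "\<exists>ws. vecs_indep d (vs @ ws) \<and> set ws \<subseteq> W \<and> W \<subseteq> range (vec_lincomb d (vs @ ws))"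
proof -
  let ?P = "\<lambda>ws. vecs_indep d (vs @ ws) \<and> set ws \<subseteq> W"
  have P0: "?P []" using ind by simp
  have bound: "\<forall>ws. ?P ws \<longrightarrow> length ws < Suc d"
    using vecs_indep_length by fastforce
  obtain ws where ws: "?P ws" and max: "\<forall>ys. ?P ys \<longrightarrow> length ys \<le> length ws"
    using ex_has_greatest_nat[of ?P "[]" length "Suc d", OF P0 bound] by blast
  have "W \<subseteq> range (vec_lincomb d (vs @ ws))"
  proof
    fix w assume w: "w \<in> W"
    show "w \<in> range (vec_lincomb d (vs @ ws))"
    proof (rule ccontr)
      assume nw: "w \<notin> range (vec_lincomb d (vs @ ws))"
      have "w \<in> carrier_vec d" using w is_subspaceD(1)[OF W] by auto
      then have "?P (ws @ [w])" using vecs_indep_snoc[OF conjunct1[OF ws] _ nw] ws w by simp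
      with max show False by fastforce
    qed
  qed
  with ws show ?thesis by blast
qed

lemma vecs_indep_spanning_invertible:
  assumes ind: "vecs_indep d ws" and span: "carrier_vec d \<subseteq> range (vec_lincomb d ws)"
  obtains Q where "length ws = d" "Q \<in> carrier_mat d d"
    "mat_of_cols d ws * Q = 1\<^sub>m d" "Q * mat_of_cols d ws = 1\<^sub>m d"
proof -
  let ?m = "length ws"
  have ws: "set ws \<subseteq> carrier_vec d" using ind unfolding vecs_indep_def by auto
  have P: "mat_of_cols d ws \<in> carrier_mat d ?m" by simp
  have inj: "a = b" if a: "a \<in> carrier_vec ?m" and b: "b \<in> carrier_vec ?m"
    and eq: "mat_of_cols d ws *\<^sub>v a = mat_of_cols d ws *\<^sub>v b" for a b
  proof -
    have "vec_lincomb d ws (\<lambda>i. a $ i - b $ i) = 0\<^sub>v d"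
    proof (rule eq_vecI)
      fix j assume "j < dim_vec (0\<^sub>v d :: complex vec)"
      then have j: "j < d" by simp
      have "vec_lincomb d ws (\<lambda>i. a $ i) $ j = vec_lincomb d ws (\<lambda>i. b $ i) $ j"
        using eq unfolding mat_of_cols_mult_vec[OF ws a] mat_of_cols_mult_vec[OF ws b] by simp
      then show "vec_lincomb d ws (\<lambda>i. a $ i - b $ i) $ j = 0\<^sub>v d $ j"
        using j by (simp add: vec_lincomb_def left_diff_distrib sum_subtractf)
    qed simp
    from vecs_indepD[OF ind this] show "a = b" using a b by (intro eq_vecI) auto
  qed
  have surj: "\<exists>v\<in>carrier_vec ?m. mat_of_cols d ws *\<^sub>v v = w" if w: "w \<in> carrier_vec d" for w
  proof -
    obtain c where "w = vec_lincomb d ws c" using span w by auto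
    also have "\<dots> = mat_of_cols d ws *\<^sub>v vec ?m c"
      unfolding mat_of_cols_mult_vec[OF ws vec_carrier] by (auto simp: vec_lincomb_def intro!: sum.cong)
    finally show ?thesis by (auto intro!: bexI[of _ "vec ?m c"])
  qed
  obtain B where B: "B \<in> carrier_mat ?m d"
    and PB: "mat_of_cols d ws * B = 1\<^sub>m d" and BP: "B * mat_of_cols d ws = 1\<^sub>m ?m"
    by (rule mat_bij_imp_inverse[OF P inj surj])
  have "?m = d" by (rule mat_inverse_dim_eq[OF B P BP PB])
  with B PB BP show ?thesis by (intro that[of B]) simp_all
qed

lemma mat_of_cols_mult_padded_vec:
  assumes ws: "set (vs @ us) \<subseteq> carrier_vec d"
  shows "mat_of_cols d (vs @ us) *\<^sub>v vec (length (vs @ us)) (\<lambda>l. if l < length vs then c l else 0) =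
    vec_lincomb d vs c"
proof (rule eq_vecI)
  let ?m = "length (vs @ us)" and ?k = "length vs"
  let ?a = "vec ?m (\<lambda>l. if l < ?k then c l else 0)"
  fix i assume "i < dim_vec (vec_lincomb d vs c)"
  then have i: "i < d" by simp
  have "(mat_of_cols d (vs @ us) *\<^sub>v ?a) $ i = (\<Sum>l<?m. ?a $ l * (vs @ us) ! l $ i)"
    using i unfolding mat_of_cols_mult_vec[OF ws vec_carrier] by (simp add: vec_lincomb_def)
  also have "\<dots> = (\<Sum>l<?k. ?a $ l * (vs @ us) ! l $ i) + (\<Sum>l<?m - ?k. ?a $ (l + ?k) * (vs @ us) ! (l + ?k) $ i)"
    by (rule sum_lessThan_split) simp
  also have "\<dots> = (\<Sum>l<?k. c l * vs ! l $ i)"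
    by (auto simp: nth_append intro!: sum.cong sum.neutral)
  finally show "(mat_of_cols d (vs @ us) *\<^sub>v ?a) $ i = vec_lincomb d vs c $ i"
    using i by (simp add: vec_lincomb_def)
qed simp

text \<open>The columns of \<open>P\<close> form a basis of \<open>\<complex>\<^sup>d\<close> whose first \<open>k\<close> vectors span \<open>W\<close>;
  \<open>Q\<close> computes coordinates with respect to it.\<close>

lemma subspace_adapted_basis:
  assumes W: "is_subspace d W" and W0: "W \<noteq> {0\<^sub>v d}" and Wd: "W \<noteq> carrier_vec d"
  obtains k P Q where "0 < k" "k < d" "P \<in> carrier_mat d d" "Q \<in> carrier_mat d d"
    "P * Q = 1\<^sub>m d" "Q * P = 1\<^sub>m d" "\<And>i. i < k \<Longrightarrow> col P i \<in> W"
    "\<And>w j. w \<in> W \<Longrightarrow> k \<le> j \<Longrightarrow> j < d \<Longrightarrow> (Q *\<^sub>v w) $ j = 0"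
proof -
  have "\<exists>ws. vecs_indep d ([] @ ws) \<and> set ws \<subseteq> W \<and> W \<subseteq> range (vec_lincomb d ([] @ ws))"
    by (rule vecs_indep_extend_spanning[OF W]) (auto simp: vecs_indep_def)
  then obtain vs where vs: "vecs_indep d vs" "set vs \<subseteq> W" "W \<subseteq> range (vec_lincomb d vs)"
    by auto
  have "set vs \<subseteq> carrier_vec d" using vs(2) is_subspaceD(1)[OF W] by auto
  then obtain us where us: "vecs_indep d (vs @ us)" "carrier_vec d \<subseteq> range (vec_lincomb d (vs @ us))"
    using vecs_indep_extend_spanning[OF is_subspace_carrier_vec vs(1)] by auto
  define ws where "ws = vs @ us"
  define k where "k = length vs"
  obtain Q where len: "length ws = d" and Q: "Q \<in> carrier_mat d d"
    and PQ: "mat_of_cols d ws * Q = 1\<^sub>m d" and QP: "Q * mat_of_cols d ws = 1\<^sub>m d"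
    by (rule vecs_indep_spanning_invertible[OF us[folded ws_def]])
  define P where "P = mat_of_cols d ws"
  note PQ = PQ[folded P_def] and QP = QP[folded P_def]
  have P: "P \<in> carrier_mat d d" unfolding P_def using mat_of_cols_carrier(1)[of d ws] len by simp
  have wsc: "set ws \<subseteq> carrier_vec d" using us(1) unfolding ws_def vecs_indep_def by auto
  have kd: "k \<le> d" using len unfolding ws_def k_def by simp
  have k0: "0 < k"
  proof (rule ccontr)
    assume "\<not> 0 < k"
    then have "W \<subseteq> {0\<^sub>v d}" using vs(3) unfolding k_def by (auto simp: vec_lincomb_Nil)
    then show False using W0 is_subspaceD(2)[OF W] by auto
  qed
  have kd': "k < d"
  proof (rule ccontr)
    assume "\<not> k < d"
    then have "us = []" using len kd unfolding ws_def k_def by simp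
    then have "carrier_vec d \<subseteq> W" using us(2) vec_lincomb_in_subspace[OF W vs(2)] by auto
    then show False using Wd is_subspaceD(1)[OF W] by auto
  qed
  have colW: "col P i \<in> W" if i: "i < k" for i
  proof -
    have "col P i = ws ! i" unfolding P_def using i kd len wsc by (intro col_mat_of_cols) auto
    also have "\<dots> = vs ! i" using i unfolding ws_def k_def by (simp add: nth_append)
    finally show ?thesis using vs(2) i unfolding k_def by auto
  qed
  have QW: "(Q *\<^sub>v w) $ j = 0" if w: "w \<in> W" and j: "k \<le> j" "j < d" for w j
  proof -
    obtain c where c: "w = vec_lincomb d vs c" using vs(3) w by auto
    define a where "a = vec d (\<lambda>l. if l < k then c l else 0)"
    have a: "a \<in> carrier_vec d" unfolding a_def by simp
    have "P *\<^sub>v a = w"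
      using mat_of_cols_mult_padded_vec[OF wsc[unfolded ws_def], of c] len
      unfolding P_def a_def c ws_def k_def by simp
    then have "Q *\<^sub>v w = (Q * P) *\<^sub>v a" using P Q a by (simp add: assoc_mult_mat_vec)
    also have "\<dots> = a" using QP a by simp
    finally show ?thesis using j unfolding a_def by simp
  qed
  show ?thesis by (rule that[OF k0 kd' P Q PQ QP colW QW])
qed

section \<open>Representations and their characters\<close>

lemma is_rep_carrier: "is_rep G d \<rho> \<Longrightarrow> g \<in> carrier G \<Longrightarrow> \<rho> g \<in> carrier_mat d d"
  and is_rep_one: "is_rep G d \<rho> \<Longrightarrow> \<rho> \<one>\<^bsub>G\<^esub> = 1\<^sub>m d"
  and is_rep_mult: "is_rep G d \<rho> \<Longrightarrow> g \<in> carrier G \<Longrightarrow> h \<in> carrier G \<Longrightarrow>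
    \<rho> (g \<otimes>\<^bsub>G\<^esub> h) = \<rho> g * \<rho> h"
  unfolding is_rep_def by auto

lemma is_rep_dim:
  assumes "is_rep G d \<rho>" "g \<in> carrier G"
  shows "dim_row (\<rho> g) = d" "dim_col (\<rho> g) = d"
  using is_rep_carrier[OF assms] by auto

lemma is_irred_rep_rep: "is_irred_rep G d \<rho> \<Longrightarrow> is_rep G d \<rho>"
  unfolding is_irred_rep_def by auto

lemma is_irred_rep_invariant_subspace:
  assumes "is_irred_rep G d \<rho>" "is_subspace d W" "\<forall>g\<in>carrier G. \<forall>w\<in>W. \<rho> g *\<^sub>v w \<in> W"
  shows "W = {0\<^sub>v d} \<or> W = carrier_vec d"
  using assms unfolding is_irred_rep_def by blast

lemma Irr_obtain:
  assumes "\<chi> \<in> Irr G"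
  obtains d \<rho> where "is_irred_rep G d \<rho>" "\<chi> = character G \<rho>"
  using assms unfolding Irr_def by auto

lemma is_rep_entry_mult:
  assumes rep: "is_rep G d \<rho>" and "g \<in> carrier G" "h \<in> carrier G" "i < d" "j < d"
  shows "\<rho> (g \<otimes>\<^bsub>G\<^esub> h) $$ (i,j) = (\<Sum>l<d. \<rho> g $$ (i,l) * \<rho> h $$ (l,j))"
  using assms by (simp add: is_rep_mult index_mult_mat_sum[OF is_rep_carrier is_rep_carrier])

lemma is_rep_conj:
  assumes rep: "is_rep G d \<rho>" and P: "P \<in> carrier_mat d d" and Q: "Q \<in> carrier_mat d d"
    and PQ: "P * Q = 1\<^sub>m d" and QP: "Q * P = 1\<^sub>m d"
  shows "is_rep G d (\<lambda>g. Q * \<rho> g * P)"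
  unfolding is_rep_def
proof (intro conjI ballI)
  fix g h assume g: "g \<in> carrier G" and h: "h \<in> carrier G"
  note \<rho> = is_rep_carrier[OF rep g] is_rep_carrier[OF rep h]
  show "Q * \<rho> g * P \<in> carrier_mat d d" using P Q \<rho> by auto
  have "Q * \<rho> g * P * (Q * \<rho> h * P) = Q * \<rho> g * (P * Q) * \<rho> h * P"
    using P Q \<rho> by (simp add: assoc_mult_mat[of _ d d _ d _ d])
  also have "\<dots> = Q * (\<rho> g * \<rho> h) * P"
    unfolding PQ using P Q \<rho> by (simp add: assoc_mult_mat[of _ d d _ d _ d])
  finally show "Q * \<rho> (g \<otimes>\<^bsub>G\<^esub> h) * P = Q * \<rho> g * P * (Q * \<rho> h * P)"
    using is_rep_mult[OF rep g h] by simp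
qed (use rep P Q QP in \<open>simp add: is_rep_one\<close>)

definition upper_left_block :: "nat \<Rightarrow> 'a mat \<Rightarrow> 'a mat" where
  "upper_left_block k A = mat k k (\<lambda>(i,j). A $$ (i,j))"

definition lower_right_block :: "nat \<Rightarrow> 'a mat \<Rightarrow> 'a mat" where
  "lower_right_block k A = mat (dim_row A - k) (dim_row A - k) (\<lambda>(i,j). A $$ (i + k, j + k))"

definition lower_left_block_zero :: "nat \<Rightarrow> 'a::zero mat \<Rightarrow> bool" where
  "lower_left_block_zero k A \<longleftrightarrow> (\<forall>i j. i < k \<longrightarrow> k \<le> j \<longrightarrow> j < dim_row A \<longrightarrow> A $$ (j,i) = 0)"

lemma block_triangular_mult:
  fixes A B :: "'a::comm_ring_1 mat"
  assumes A: "A \<in> carrier_mat d d" and B: "B \<in> carrier_mat d d" and kd: "k \<le> d"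
    and A0: "lower_left_block_zero k A" and B0: "lower_left_block_zero k B"
  shows "upper_left_block k (A * B) = upper_left_block k A * upper_left_block k B"
    and "lower_right_block k (A * B) = lower_right_block k A * lower_right_block k B"
proof -
  have mult: "(A * B) $$ (i,j) = (\<Sum>l<k. A $$ (i,l) * B $$ (l,j)) + (\<Sum>l<d - k. A $$ (i,l + k) * B $$ (l + k,j))"
    if "i < d" "j < d" for i j
    using that A B sum_lessThan_split[OF kd] by (simp add: scalar_prod_def lessThan_atLeast0)
  show "upper_left_block k (A * B) = upper_left_block k A * upper_left_block k B"
  proof (rule eq_matI)
    fix i j assume "i < dim_row (upper_left_block k A * upper_left_block k B)"
      "j < dim_col (upper_left_block k A * upper_left_block k B)"
    then have ij: "i < k" "j < k" by (auto simp: upper_left_block_def)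
    have "(\<Sum>l<d - k. A $$ (i,l + k) * B $$ (l + k,j)) = 0"
      using B0 B ij kd unfolding lower_left_block_zero_def by (intro sum.neutral) auto
    then show "upper_left_block k (A * B) $$ (i,j) = (upper_left_block k A * upper_left_block k B) $$ (i,j)"
      using ij kd mult by (simp add: upper_left_block_def scalar_prod_def lessThan_atLeast0)
  qed (auto simp: upper_left_block_def)
  show "lower_right_block k (A * B) = lower_right_block k A * lower_right_block k B"
  proof (rule eq_matI)
    fix i j assume "i < dim_row (lower_right_block k A * lower_right_block k B)"
      "j < dim_col (lower_right_block k A * lower_right_block k B)"
    then have ij: "i < d - k" "j < d - k" using A B by (auto simp: lower_right_block_def)
    have "(\<Sum>l<k. A $$ (i + k,l) * B $$ (l,j + k)) = 0"
      using A0 A ij kd unfolding lower_left_block_zero_def by (intro sum.neutral) auto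
    then show "lower_right_block k (A * B) $$ (i,j) = (lower_right_block k A * lower_right_block k B) $$ (i,j)"
      using ij kd mult A B by (simp add: lower_right_block_def scalar_prod_def lessThan_atLeast0)
  qed (use A B in \<open>auto simp: lower_right_block_def\<close>)
qed

lemma mat_trace_blocks:
  assumes A: "A \<in> carrier_mat d d" and kd: "k \<le> d"
  shows "mat_trace A = mat_trace (upper_left_block k A) + mat_trace (lower_right_block k A)"
  using A sum_lessThan_split[OF kd, of "\<lambda>i. A $$ (i,i)"]
  by (simp add: mat_trace_def upper_left_block_def lower_right_block_def)

lemma is_rep_block_triangular:
  assumes rep: "is_rep G d R" and kd: "k \<le> d"
    and zero: "\<And>g. g \<in> carrier G \<Longrightarrow> lower_left_block_zero k (R g)"
  shows "is_rep G k (\<lambda>g. upper_left_block k (R g))"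
    and "is_rep G (d - k) (\<lambda>g. lower_right_block k (R g))"
  using rep kd block_triangular_mult[OF is_rep_carrier[OF rep] is_rep_carrier[OF rep] kd zero zero]
  unfolding is_rep_def
  by (auto simp: upper_left_block_def lower_right_block_def intro!: eq_matI)

lemma is_rep_reducible_split:
  assumes rep: "is_rep G d \<rho>" and W: "is_subspace d W"
    and inv: "\<forall>g\<in>carrier G. \<forall>w\<in>W. \<rho> g *\<^sub>v w \<in> W"
    and W0: "W \<noteq> {0\<^sub>v d}" and Wd: "W \<noteq> carrier_vec d"
  obtains k \<rho>1 \<rho>2 where "0 < k" "k < d" "is_rep G k \<rho>1" "is_rep G (d - k) \<rho>2"
    "\<And>g. g \<in> carrier G \<Longrightarrow> mat_trace (\<rho> g) = mat_trace (\<rho>1 g) + mat_trace (\<rho>2 g)"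
proof -
  obtain k P Q where k: "0 < k" "k < d" and P: "P \<in> carrier_mat d d" and Q: "Q \<in> carrier_mat d d"
    and PQ: "P * Q = 1\<^sub>m d" and QP: "Q * P = 1\<^sub>m d" and colW: "\<And>i. i < k \<Longrightarrow> col P i \<in> W"
    and QW: "\<And>w j. w \<in> W \<Longrightarrow> k \<le> j \<Longrightarrow> j < d \<Longrightarrow> (Q *\<^sub>v w) $ j = 0"
    using subspace_adapted_basis[OF W W0 Wd] by blast
  define R where "R g = Q * \<rho> g * P" for g
  have repR: "is_rep G d R" unfolding R_def by (rule is_rep_conj[OF rep P Q PQ QP])
  have "lower_left_block_zero k (R g)" if g: "g \<in> carrier G" for g
    unfolding lower_left_block_zero_def
  proof (intro allI impI)
    fix i j assume i: "i < k" and j: "k \<le> j" "j < dim_row (R g)"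
    note \<rho>g = is_rep_carrier[OF rep g]
    have id: "i < d" using i k by simp
    have "R g *\<^sub>v unit_vec d i = Q *\<^sub>v (\<rho> g *\<^sub>v (P *\<^sub>v unit_vec d i))"
      unfolding R_def using P Q \<rho>g by (simp add: assoc_mult_mat_vec[of _ d d _ d])
    moreover have "dim_row (R g) = d" "dim_col (R g) = d" using is_rep_carrier[OF repR g] by auto
    ultimately have "R g $$ (j,i) = (Q *\<^sub>v (\<rho> g *\<^sub>v col P i)) $ j"
      using mult_mat_unit_vec[OF is_rep_carrier[OF repR g] id] mult_mat_unit_vec[OF P id] j id
      by (metis index_col)
    then show "R g $$ (j,i) = 0" using QW[OF _ j(1)] inv g colW[OF i] j(2) P Q \<rho>g
      unfolding R_def by auto
  qed
  note blocks = is_rep_block_triangular[OF repR less_imp_le[OF k(2)] this]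
  have "mat_trace (\<rho> g) = mat_trace (upper_left_block k (R g)) + mat_trace (lower_right_block k (R g))"
    if g: "g \<in> carrier G" for g
    using mat_trace_conj[OF Q is_rep_carrier[OF rep g] P PQ] mat_trace_blocks[OF _ less_imp_le[OF k(2)]]
      is_rep_carrier[OF repR g] unfolding R_def by simp
  with k blocks that show ?thesis by blast
qed

lemma sum_mult_character_eq_0:
  assumes orth: "\<And>\<chi>. \<chi> \<in> Irr G \<Longrightarrow> (\<Sum>g\<in>carrier G. u g * \<chi> g) = 0"
  shows "is_rep G d \<rho> \<Longrightarrow> (\<Sum>g\<in>carrier G. u g * character G \<rho> g) = 0"
proof (induction d arbitrary: \<rho> rule: less_induct)
  case (less d)
  show ?case
  proof (cases "is_irred_rep G d \<rho>")
    case True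
    then show ?thesis using orth unfolding Irr_def by blast
  next
    case irred: False
    show ?thesis
    proof (cases "d = 0")
      case True
      then show ?thesis using less.prems
        by (intro sum.neutral ballI) (auto simp: character_def mat_trace_def dest: is_rep_carrier)
    next
      case False
      with irred less.prems obtain W where W: "is_subspace d W"
        and inv: "\<forall>g\<in>carrier G. \<forall>w\<in>W. \<rho> g *\<^sub>v w \<in> W" and "W \<noteq> {0\<^sub>v d}" "W \<noteq> carrier_vec d"
        unfolding is_irred_rep_def by auto
      then obtain k \<rho>1 \<rho>2 where k: "0 < k" "k < d" and rep: "is_rep G k \<rho>1" "is_rep G (d - k) \<rho>2"
        and tr: "\<And>g. g \<in> carrier G \<Longrightarrow> mat_trace (\<rho> g) = mat_trace (\<rho>1 g) + mat_trace (\<rho>2 g)"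
        using is_rep_reducible_split[OF less.prems W] by blast
      have "(\<Sum>g\<in>carrier G. u g * character G \<rho> g) =
          (\<Sum>g\<in>carrier G. u g * character G \<rho>1 g) + (\<Sum>g\<in>carrier G. u g * character G \<rho>2 g)"
        unfolding sum.distrib[symmetric] by (intro sum.cong refl) (simp add: character_def tr distrib_left)
      also have "\<dots> = 0" using less.IH[OF k(2) rep(1)] less.IH[of "d - k" \<rho>2] rep(2) k by simp
      finally show ?thesis .
    qed
  qed
qed

context group
begin

lemma is_rep_inv:
  assumes rep: "is_rep G d \<rho>" and g: "g \<in> carrier G"
  shows "\<rho> (inv g) * \<rho> g = 1\<^sub>m d"
proof -
  have "\<rho> (inv g) * \<rho> g = \<rho> (inv g \<otimes> g)" using is_rep_mult[OF rep inv_closed[OF g] g] by simp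
  then show ?thesis using g is_rep_one[OF rep] by simp
qed

lemma is_rep_pow:
  assumes rep: "is_rep G d \<rho>" and g: "g \<in> carrier G"
  shows "\<rho> (g [^] k) = \<rho> g ^\<^sub>m k"
proof (induction k)
  case 0
  have "dim_row (\<rho> g) = d" using is_rep_carrier[OF rep g] by simp
  then show ?case using is_rep_one[OF rep] by simp
next
  case (Suc k)
  then show ?case using rep g by (simp add: is_rep_mult)
qed

lemma character_conj:
  assumes rep: "is_rep G d \<rho>" and g: "g \<in> carrier G" and y: "y \<in> carrier G"
  shows "character G \<rho> (g \<otimes> y \<otimes> inv g) = character G \<rho> y"
proof -
  note \<rho> = is_rep_carrier[OF rep]
  have "\<rho> (g \<otimes> y \<otimes> inv g) = \<rho> g * \<rho> y * \<rho> (inv g)"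
    using g y by (simp add: is_rep_mult[OF rep])
  then show ?thesis
    using mat_trace_conj[OF \<rho>[OF g] \<rho>[OF y] \<rho>[OF inv_closed[OF g]] is_rep_inv[OF rep g]] g y
    by (simp add: character_def)
qed

end

section \<open>Schur's lemma\<close>

lemma irred_rep_commuting_scalar:
  assumes irr: "is_irred_rep G d \<rho>" and M: "M \<in> carrier_mat d d"
    and comm: "\<And>g. g \<in> carrier G \<Longrightarrow> M * \<rho> g = \<rho> g * M"
  obtains c where "M = c \<cdot>\<^sub>m 1\<^sub>m d"
proof -
  have "0 < d" using irr unfolding is_irred_rep_def by auto
  then obtain lam where "lam \<in> spectrum M" using spectrum_non_empty[OF M] by auto
  then obtain v where v: "v \<in> carrier_vec d" "v \<noteq> 0\<^sub>v d" "M *\<^sub>v v = lam \<cdot>\<^sub>v v"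
    unfolding spectrum_def eigenvalue_def eigenvector_def using M by auto
  define W where "W = {w \<in> carrier_vec d. M *\<^sub>v w = lam \<cdot>\<^sub>v w}"
  have "\<forall>g\<in>carrier G. \<forall>w\<in>W. \<rho> g *\<^sub>v w \<in> W"
  proof (intro ballI)
    fix g w assume g: "g \<in> carrier G" and w: "w \<in> W"
    have \<rho>g: "\<rho> g \<in> carrier_mat d d" using is_rep_carrier[OF is_irred_rep_rep[OF irr] g] .
    have wc: "w \<in> carrier_vec d" and Mw: "M *\<^sub>v w = lam \<cdot>\<^sub>v w" using w unfolding W_def by auto
    have "M *\<^sub>v (\<rho> g *\<^sub>v w) = (M * \<rho> g) *\<^sub>v w" using M \<rho>g wc by (simp add: assoc_mult_mat_vec)
    also have "\<dots> = \<rho> g *\<^sub>v (M *\<^sub>v w)" using M \<rho>g wc comm[OF g] by (simp add: assoc_mult_mat_vec)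
    also have "\<dots> = lam \<cdot>\<^sub>v (\<rho> g *\<^sub>v w)" using \<rho>g wc by (simp add: Mw mult_mat_vec)
    finally show "\<rho> g *\<^sub>v w \<in> W" unfolding W_def using \<rho>g wc by auto
  qed
  then have "W = {0\<^sub>v d} \<or> W = carrier_vec d"
    by (rule is_irred_rep_invariant_subspace[OF irr is_subspace_eigenspace[OF M, where lam = lam, folded W_def]])
  moreover have "v \<in> W" using v unfolding W_def by auto
  ultimately have W: "W = carrier_vec d" using v(2) by auto
  have "M = lam \<cdot>\<^sub>m 1\<^sub>m d"
  proof (rule mat_eq_unit_vecI[OF M])
    fix j assume j: "j < d"
    then have "unit_vec d j \<in> W" unfolding W by simp
    then have "M *\<^sub>v unit_vec d j = lam \<cdot>\<^sub>v unit_vec d j" unfolding W_def by simp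
    then show "M *\<^sub>v unit_vec d j = (lam \<cdot>\<^sub>m 1\<^sub>m d) *\<^sub>v unit_vec d j"
      using j by (auto simp: mult_mat_unit_vec[of _ d d] intro!: eq_vecI)
  qed simp
  then show ?thesis by (rule that)
qed

lemma irred_intertwiner_kernel:
  assumes irr: "is_irred_rep G d \<rho>" and A: "A \<in> carrier_mat e d" and A0: "A \<noteq> 0\<^sub>m e d"
    and \<psi>: "\<And>h. h \<in> carrier G \<Longrightarrow> \<psi> h \<in> carrier_mat e e"
    and comm: "\<And>h. h \<in> carrier G \<Longrightarrow> \<psi> h * A = A * \<rho> h"
  shows "{v \<in> carrier_vec d. A *\<^sub>v v = 0\<^sub>v e} = {0\<^sub>v d}"
proof -
  note \<rho> = is_rep_carrier[OF is_irred_rep_rep[OF irr]]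
  define K where "K = {v \<in> carrier_vec d. A *\<^sub>v v = 0\<^sub>v e}"
  have "\<forall>g\<in>carrier G. \<forall>w\<in>K. \<rho> g *\<^sub>v w \<in> K"
  proof (intro ballI)
    fix g w assume g: "g \<in> carrier G" and w: "w \<in> K"
    then have wc: "w \<in> carrier_vec d" and Aw: "A *\<^sub>v w = 0\<^sub>v e" unfolding K_def by auto
    have "A *\<^sub>v (\<rho> g *\<^sub>v w) = (\<psi> g * A) *\<^sub>v w"
      using A \<rho>[OF g] wc comm[OF g] by (simp add: assoc_mult_mat_vec)
    also have "\<dots> = 0\<^sub>v e" using A \<psi>[OF g] wc Aw by (simp add: assoc_mult_mat_vec mult_mat_zero_vec)
    finally show "\<rho> g *\<^sub>v w \<in> K" unfolding K_def using \<rho>[OF g] wc by auto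
  qed
  then have "K = {0\<^sub>v d} \<or> K = carrier_vec d"
    by (rule is_irred_rep_invariant_subspace[OF irr is_subspace_mat_kernel[OF A, folded K_def]])
  moreover have "K \<noteq> carrier_vec d"
  proof
    assume K: "K = carrier_vec d"
    have "A = 0\<^sub>m e d"
    proof (rule mat_eq_unit_vecI[OF A])
      fix j assume "j < d"
      then have "unit_vec d j \<in> K" unfolding K by simp
      then show "A *\<^sub>v unit_vec d j = 0\<^sub>m e d *\<^sub>v unit_vec d j"
        using \<open>j < d\<close> unfolding K_def by (simp add: mult_mat_unit_vec[of _ e d])
    qed simp
    with A0 show False ..
  qed
  ultimately show ?thesis unfolding K_def by simp
qed

lemma irred_intertwiner_image:
  assumes irr: "is_irred_rep G e \<psi>" and A: "A \<in> carrier_mat e d" and A0: "A \<noteq> 0\<^sub>m e d"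
    and \<rho>: "\<And>h. h \<in> carrier G \<Longrightarrow> \<rho> h \<in> carrier_mat d d"
    and comm: "\<And>h. h \<in> carrier G \<Longrightarrow> \<psi> h * A = A * \<rho> h"
  shows "{A *\<^sub>v v | v. v \<in> carrier_vec d} = carrier_vec e"
proof -
  note \<psi> = is_rep_carrier[OF is_irred_rep_rep[OF irr]]
  define I where "I = {A *\<^sub>v v | v. v \<in> carrier_vec d}"
  have "\<forall>g\<in>carrier G. \<forall>w\<in>I. \<psi> g *\<^sub>v w \<in> I"
  proof (intro ballI)
    fix g w assume g: "g \<in> carrier G" and "w \<in> I"
    then obtain a where a: "a \<in> carrier_vec d" and w: "w = A *\<^sub>v a" unfolding I_def by auto
    have "\<psi> g *\<^sub>v w = (\<psi> g * A) *\<^sub>v a" unfolding w using A \<psi>[OF g] a by (simp add: assoc_mult_mat_vec)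
    also have "\<dots> = A *\<^sub>v (\<rho> g *\<^sub>v a)" using A \<rho>[OF g] a comm[OF g] by (simp add: assoc_mult_mat_vec)
    finally show "\<psi> g *\<^sub>v w \<in> I" unfolding I_def using \<rho>[OF g] a by auto
  qed
  then have "I = {0\<^sub>v e} \<or> I = carrier_vec e"
    by (rule is_irred_rep_invariant_subspace[OF irr is_subspace_mat_image[OF A, folded I_def]])
  moreover have "I \<noteq> {0\<^sub>v e}"
  proof
    assume I: "I = {0\<^sub>v e}"
    have "A = 0\<^sub>m e d"
    proof (rule mat_eq_unit_vecI[OF A])
      fix j assume "j < d"
      then have "A *\<^sub>v unit_vec d j \<in> I" unfolding I_def by auto
      then show "A *\<^sub>v unit_vec d j = 0\<^sub>m e d *\<^sub>v unit_vec d j"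
        using \<open>j < d\<close> unfolding I by (simp add: mult_mat_unit_vec[of _ e d])
    qed simp
    with A0 show False ..
  qed
  ultimately show ?thesis unfolding I_def by simp
qed

lemma irred_intertwiner_invertible:
  assumes irr1: "is_irred_rep G d \<rho>" and irr2: "is_irred_rep G e \<psi>"
    and A: "A \<in> carrier_mat e d" and A0: "A \<noteq> 0\<^sub>m e d"
    and comm: "\<And>h. h \<in> carrier G \<Longrightarrow> \<psi> h * A = A * \<rho> h"
  obtains B where "B \<in> carrier_mat d e" "A * B = 1\<^sub>m e" "B * A = 1\<^sub>m d"
proof -
  note K = irred_intertwiner_kernel[OF irr1 A A0 is_rep_carrier[OF is_irred_rep_rep[OF irr2]] comm]
  note I = irred_intertwiner_image[OF irr2 A A0 is_rep_carrier[OF is_irred_rep_rep[OF irr1]] comm]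
  have inj: "v = w" if v: "v \<in> carrier_vec d" and w: "w \<in> carrier_vec d" and eq: "A *\<^sub>v v = A *\<^sub>v w"
    for v w
  proof -
    have "A *\<^sub>v (v - w) = 0\<^sub>v e" using A v w eq by (simp add: mult_minus_distrib_mat_vec)
    then have "v - w \<in> {v \<in> carrier_vec d. A *\<^sub>v v = 0\<^sub>v e}" using v w by simp
    then have vw: "v - w = 0\<^sub>v d" using K by blast
    show "v = w"
    proof (rule eq_vecI)
      fix i assume "i < dim_vec w"
      then have "i < d" using w by simp
      then have "(v - w) $ i = 0" unfolding vw by simp
      then show "v $ i = w $ i" using \<open>i < d\<close> v w by simp
    qed (use v w in simp)
  qed
  have surj: "\<exists>v\<in>carrier_vec d. A *\<^sub>v v = w" if "w \<in> carrier_vec e" for w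
  proof -
    have "w \<in> {A *\<^sub>v v | v. v \<in> carrier_vec d}" using I that by blast
    then show ?thesis by blast
  qed
  show ?thesis by (rule mat_bij_imp_inverse[OF A inj surj that])
qed

lemma irred_intertwiner_character_eq:
  assumes irr1: "is_irred_rep G d \<rho>" and irr2: "is_irred_rep G e \<psi>"
    and A: "A \<in> carrier_mat e d" and A0: "A \<noteq> 0\<^sub>m e d"
    and comm: "\<And>h. h \<in> carrier G \<Longrightarrow> \<psi> h * A = A * \<rho> h"
  shows "character G \<psi> = character G \<rho>"
proof -
  obtain B where B: "B \<in> carrier_mat d e" and AB: "A * B = 1\<^sub>m e" and BA: "B * A = 1\<^sub>m d"
    by (rule irred_intertwiner_invertible[OF irr1 irr2 A A0 comm])
  have "mat_trace (\<psi> h) = mat_trace (\<rho> h)" if h: "h \<in> carrier G" for h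
  proof -
    note \<rho> = is_rep_carrier[OF is_irred_rep_rep[OF irr1] h]
      and \<psi> = is_rep_carrier[OF is_irred_rep_rep[OF irr2] h]
    have "\<psi> h = \<psi> h * (A * B)" using \<psi> by (simp add: AB)
    also have "\<dots> = (\<psi> h * A) * B" using \<psi> A B by (simp add: assoc_mult_mat)
    also have "\<dots> = A * \<rho> h * B" by (simp add: comm[OF h])
    finally show ?thesis using mat_trace_conj[OF A \<rho> B BA] by simp
  qed
  then show ?thesis unfolding character_def by auto
qed

section \<open>Orthogonality of irreducible characters\<close>

context group
begin

lemma card_carrier_pos: "finite (carrier G) \<Longrightarrow> 0 < card (carrier G)"
  unfolding card_gt_0_iff using one_closed by blast

lemma sum_carrier_reindex_mult_left:
  assumes h: "h \<in> carrier G"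
  shows "(\<Sum>g\<in>carrier G. f (h \<otimes> g)) = (\<Sum>g\<in>carrier G. f g)"
  by (rule sum.reindex_bij_witness[where i = "\<lambda>g. inv h \<otimes> g" and j = "\<lambda>g. h \<otimes> g"])
    (use h in \<open>auto simp: m_assoc[symmetric]\<close>)

lemma sum_carrier_reindex_inv: "(\<Sum>g\<in>carrier G. f (inv g)) = (\<Sum>g\<in>carrier G. f g)"
  by (rule sum.reindex_bij_witness[where i = "\<lambda>g. inv g" and j = "\<lambda>g. inv g"]) auto

lemma sum_carrier_reindex_conj:
  assumes h: "h \<in> carrier G"
  shows "(\<Sum>g\<in>carrier G. f (h \<otimes> g \<otimes> inv h)) = (\<Sum>g\<in>carrier G. f g)"
proof -
  have "(\<Sum>g\<in>carrier G. f ((\<lambda>x\<in>carrier G. h \<otimes> x \<otimes> inv h) g)) = (\<Sum>g\<in>carrier G. f g)"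
    by (rule sum.reindex_bij_betw[OF conjugation_is_bij[OF h]])
  then show ?thesis by simp
qed

end

definition char_pairing :: "('a, 'b) monoid_scheme \<Rightarrow> ('a \<Rightarrow> complex) \<Rightarrow> ('a \<Rightarrow> complex) \<Rightarrow> complex" where
  "char_pairing G f h = (\<Sum>g\<in>carrier G. f g * h (inv\<^bsub>G\<^esub> g))"

lemma char_pairing_diff:
  "char_pairing G (\<lambda>w. f w - f' w) \<chi> = char_pairing G f \<chi> - char_pairing G f' \<chi>"
  unfolding char_pairing_def by (simp add: left_diff_distrib sum_subtractf)

lemma char_pairing_scale: "char_pairing G (\<lambda>w. c * f w) \<chi> = c * char_pairing G f \<chi>"
  unfolding char_pairing_def by (simp add: sum_distrib_left mult.assoc)

lemma char_pairing_sum: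
  "char_pairing G (\<lambda>w. \<Sum>\<psi>\<in>X. f \<psi> w) \<chi> = (\<Sum>\<psi>\<in>X. char_pairing G (f \<psi>) \<chi>)"
  unfolding char_pairing_def sum_distrib_right by (rule sum.swap)

context group
begin

text \<open>\<open>A\<close> is the group average of \<open>\<psi>(g) E\<^sub>j\<^sub>i \<rho>(g\<inverse>)\<close>, with \<open>E\<^sub>j\<^sub>i\<close> a matrix unit.\<close>

lemma averaged_intertwiner:
  assumes rep1: "is_rep G d \<rho>" and rep2: "is_rep G e \<psi>" and i: "i < d" and j: "j < e"
    and h: "h \<in> carrier G"
  defines "A \<equiv> mat e d (\<lambda>(a,b). \<Sum>g\<in>carrier G. \<psi> g $$ (a,j) * \<rho> (inv g) $$ (i,b))"
  shows "\<psi> h * A = A * \<rho> h"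
proof (rule eq_matI)
  note \<rho> = is_rep_carrier[OF rep1] and \<psi> = is_rep_carrier[OF rep2]
  have A: "A \<in> carrier_mat e d" unfolding A_def by simp
  fix a b assume "a < dim_row (A * \<rho> h)" "b < dim_col (A * \<rho> h)"
  then have a: "a < e" and b: "b < d" using A \<rho>[OF h] by auto
  have "(\<psi> h * A) $$ (a,b) = (\<Sum>c<e. \<psi> h $$ (a,c) * (\<Sum>g\<in>carrier G. \<psi> g $$ (c,j) * \<rho> (inv g) $$ (i,b)))"
    unfolding index_mult_mat_sum[OF \<psi>[OF h] A a b] by (intro sum.cong refl) (use b in \<open>simp add: A_def\<close>)
  also have "\<dots> = (\<Sum>g\<in>carrier G. (\<Sum>c<e. \<psi> h $$ (a,c) * \<psi> g $$ (c,j)) * \<rho> (inv g) $$ (i,b))"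
    by (simp add: sum_distrib_left sum_distrib_right mult.assoc sum.swap[of _ "{..<e}"])
  also have "\<dots> = (\<Sum>g\<in>carrier G. \<psi> (h \<otimes> g) $$ (a,j) * \<rho> (inv g) $$ (i,b))"
    using is_rep_entry_mult[OF rep2 h _ a j] by simp
  also have "\<dots> = (\<Sum>g\<in>carrier G. \<psi> (h \<otimes> g) $$ (a,j) * \<rho> (inv (h \<otimes> g) \<otimes> h) $$ (i,b))"
    by (intro sum.cong refl) (use h in \<open>simp add: inv_mult_group m_assoc\<close>)
  also have "\<dots> = (\<Sum>g\<in>carrier G. \<psi> g $$ (a,j) * \<rho> (inv g \<otimes> h) $$ (i,b))"
    by (rule sum_carrier_reindex_mult_left[OF h, where f = "\<lambda>g. \<psi> g $$ (a,j) * \<rho> (inv g \<otimes> h) $$ (i,b)"])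
  also have "\<dots> = (\<Sum>g\<in>carrier G. \<psi> g $$ (a,j) * (\<Sum>c<d. \<rho> (inv g) $$ (i,c) * \<rho> h $$ (c,b)))"
    using is_rep_entry_mult[OF rep1 _ h i b] by simp
  also have "\<dots> = (\<Sum>c<d. (\<Sum>g\<in>carrier G. \<psi> g $$ (a,j) * \<rho> (inv g) $$ (i,c)) * \<rho> h $$ (c,b))"
    by (simp add: sum_distrib_left sum_distrib_right mult.assoc sum.swap[of _ "{..<d}"])
  also have "\<dots> = (A * \<rho> h) $$ (a,b)"
    unfolding index_mult_mat_sum[OF A \<rho>[OF h] a b] by (intro sum.cong refl) (use a in \<open>simp add: A_def\<close>)
  finally show "(\<psi> h * A) $$ (a,b) = (A * \<rho> h) $$ (a,b)" .
qed (use is_rep_carrier[OF rep1 h] is_rep_carrier[OF rep2 h] in \<open>auto simp: A_def\<close>)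

lemma char_pairing_character_expand:
  assumes rep1: "is_rep G d \<rho>" and rep2: "is_rep G e \<psi>"
  shows "char_pairing G (character G \<psi>) (character G \<rho>) =
    (\<Sum>j<e. \<Sum>i<d. \<Sum>g\<in>carrier G. \<psi> g $$ (j,j) * \<rho> (inv g) $$ (i,i))"
proof -
  have "char_pairing G (character G \<psi>) (character G \<rho>) =
      (\<Sum>g\<in>carrier G. (\<Sum>j<e. \<psi> g $$ (j,j)) * (\<Sum>i<d. \<rho> (inv g) $$ (i,i)))"
    unfolding char_pairing_def character_def mat_trace_def
    using is_rep_dim[OF rep1] is_rep_dim[OF rep2] by (intro sum.cong refl) auto
  also have "\<dots> = (\<Sum>g\<in>carrier G. \<Sum>j<e. \<Sum>i<d. \<psi> g $$ (j,j) * \<rho> (inv g) $$ (i,i))"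
    by (simp only: sum_product)
  also have "\<dots> = (\<Sum>j<e. \<Sum>i<d. \<Sum>g\<in>carrier G. \<psi> g $$ (j,j) * \<rho> (inv g) $$ (i,i))"
    by (subst sum.swap) (simp add: sum.swap[of _ "carrier G"])
  finally show ?thesis .
qed

lemma char_pairing_irred_distinct:
  assumes irr1: "is_irred_rep G d \<rho>" and irr2: "is_irred_rep G e \<psi>"
    and ne: "character G \<psi> \<noteq> character G \<rho>"
  shows "char_pairing G (character G \<psi>) (character G \<rho>) = 0"
proof -
  note rep1 = is_irred_rep_rep[OF irr1] and rep2 = is_irred_rep_rep[OF irr2]
  have "(\<Sum>g\<in>carrier G. \<psi> g $$ (j,j) * \<rho> (inv g) $$ (i,i)) = 0" if i: "i < d" and j: "j < e" for i j
  proof -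
    define A where "A = mat e d (\<lambda>(a,b). \<Sum>g\<in>carrier G. \<psi> g $$ (a,j) * \<rho> (inv g) $$ (i,b))"
    have A: "A \<in> carrier_mat e d" unfolding A_def by simp
    have "A = 0\<^sub>m e d"
    proof (rule ccontr)
      assume "A \<noteq> 0\<^sub>m e d"
      then have "character G \<psi> = character G \<rho>"
        by (rule irred_intertwiner_character_eq[OF irr1 irr2 A])
          (unfold A_def, rule averaged_intertwiner[OF rep1 rep2 i j])
      with ne show False ..
    qed
    then have "A $$ (j,i) = 0" using i j by simp
    then show ?thesis using i j unfolding A_def by simp
  qed
  then show ?thesis unfolding char_pairing_character_expand[OF rep1 rep2] by simp
qed

lemma char_pairing_irred_self:
  assumes fin: "finite (carrier G)" and irr: "is_irred_rep G d \<rho>"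
  shows "char_pairing G (character G \<rho>) (character G \<rho>) = of_nat (card (carrier G))"
proof -
  note rep = is_irred_rep_rep[OF irr]
  note \<rho> = is_rep_carrier[OF rep]
  have d0: "0 < d" using irr unfolding is_irred_rep_def by auto
  let ?N = "of_nat (card (carrier G)) :: complex"
  have entry: "(\<Sum>g\<in>carrier G. \<rho> g $$ (j,j) * \<rho> (inv g) $$ (i,i)) = (if i = j then ?N / of_nat d else 0)"
    if i: "i < d" and j: "j < d" for i j
  proof -
    define A where "A = mat d d (\<lambda>(a,b). \<Sum>g\<in>carrier G. \<rho> g $$ (a,j) * \<rho> (inv g) $$ (i,b))"
    have A: "A \<in> carrier_mat d d" unfolding A_def by simp
    have "A * \<rho> h = \<rho> h * A" if "h \<in> carrier G" for h
      unfolding A_def using averaged_intertwiner[OF rep rep i j that] by simp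
    then obtain c where c: "A = c \<cdot>\<^sub>m 1\<^sub>m d" using irred_rep_commuting_scalar[OF irr A] by blast
    have "mat_trace A = (\<Sum>a<d. \<Sum>g\<in>carrier G. \<rho> g $$ (a,j) * \<rho> (inv g) $$ (i,a))"
      unfolding mat_trace_def A_def by simp
    also have "\<dots> = (\<Sum>g\<in>carrier G. \<Sum>a<d. \<rho> (inv g) $$ (i,a) * \<rho> g $$ (a,j))"
      by (subst sum.swap) (simp add: mult.commute)
    also have "\<dots> = (\<Sum>g\<in>carrier G. (\<rho> (inv g) * \<rho> g) $$ (i,j))"
      using index_mult_mat_sum[OF \<rho> \<rho> i j] by simp
    also have "\<dots> = (if i = j then ?N else 0)"
      using is_rep_inv[OF rep] i j by simp
    finally have "of_nat d * c = (if i = j then ?N else 0)" unfolding c mat_trace_def by simp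
    then have "c = (if i = j then ?N / of_nat d else 0)" using d0
      by (cases "i = j") (auto simp: field_simps)
    moreover have "A $$ (j,i) = (if i = j then c else 0)" unfolding c using i j by auto
    ultimately show ?thesis using i j unfolding A_def by auto
  qed
  have "char_pairing G (character G \<rho>) (character G \<rho>) = (\<Sum>j<d. \<Sum>i<d. if i = j then ?N / of_nat d else 0)"
    unfolding char_pairing_character_expand[OF rep rep] using entry by simp
  also have "\<dots> = ?N" using d0 by simp
  finally show ?thesis .
qed

theorem char_pairing_Irr:
  assumes fin: "finite (carrier G)" and \<psi>: "\<psi> \<in> Irr G" and \<chi>: "\<chi> \<in> Irr G"
  shows "char_pairing G \<psi> \<chi> = (if \<psi> = \<chi> then of_nat (card (carrier G)) else 0)"
proof -
  obtain d \<rho> where \<rho>: "is_irred_rep G d \<rho>" and \<chi>_def: "\<chi> = character G \<rho>" using Irr_obtain[OF \<chi>] .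
  obtain e \<phi> where \<phi>: "is_irred_rep G e \<phi>" and \<psi>_def: "\<psi> = character G \<phi>" using Irr_obtain[OF \<psi>] .
  show ?thesis
    using char_pairing_irred_self[OF fin \<rho>] char_pairing_irred_distinct[OF \<rho> \<phi>] \<chi>_def \<psi>_def by auto
qed

lemma Irr_conj:
  assumes "\<chi> \<in> Irr G" "g \<in> carrier G" "y \<in> carrier G"
  shows "\<chi> (g \<otimes> y \<otimes> inv g) = \<chi> y"
proof -
  obtain d \<rho> where irr: "is_irred_rep G d \<rho>" and \<chi>: "\<chi> = character G \<rho>" using Irr_obtain[OF assms(1)] .
  show ?thesis unfolding \<chi> by (rule character_conj[OF is_irred_rep_rep[OF irr] assms(2,3)])
qed

end

section \<open>Completeness of irreducible characters\<close>

definition rep_sum :: "('a, 'b) monoid_scheme \<Rightarrow> nat \<Rightarrow> ('a \<Rightarrow> complex) \<Rightarrow> ('a \<Rightarrow> complex mat) \<Rightarrow> complex mat" where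
  "rep_sum G d f \<rho> = mat d d (\<lambda>(a,b). \<Sum>g\<in>carrier G. f g * \<rho> g $$ (a,b))"

lemma rep_sum_carrier: "rep_sum G d f \<rho> \<in> carrier_mat d d"
  unfolding rep_sum_def by simp

context group
begin

lemma rep_sum_commute:
  assumes rep: "is_rep G d \<rho>" and h: "h \<in> carrier G"
    and cls: "\<And>g y. g \<in> carrier G \<Longrightarrow> y \<in> carrier G \<Longrightarrow> f (g \<otimes> y \<otimes> inv g) = f y"
  shows "rep_sum G d f \<rho> * \<rho> h = \<rho> h * rep_sum G d f \<rho>"
proof (rule eq_matI)
  note \<rho> = is_rep_carrier[OF rep] and T = rep_sum_carrier[of G d f \<rho>]
  fix i j assume "i < dim_row (\<rho> h * rep_sum G d f \<rho>)" "j < dim_col (\<rho> h * rep_sum G d f \<rho>)"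
  then have i: "i < d" and j: "j < d" using \<rho>[OF h] T by auto
  have "(rep_sum G d f \<rho> * \<rho> h) $$ (i,j) = (\<Sum>c<d. (\<Sum>g\<in>carrier G. f g * \<rho> g $$ (i,c)) * \<rho> h $$ (c,j))"
    unfolding index_mult_mat_sum[OF T \<rho>[OF h] i j] by (intro sum.cong refl) (use i in \<open>simp add: rep_sum_def\<close>)
  also have "\<dots> = (\<Sum>g\<in>carrier G. f g * (\<Sum>c<d. \<rho> g $$ (i,c) * \<rho> h $$ (c,j)))"
    by (simp add: sum_distrib_left sum_distrib_right mult.assoc sum.swap[of _ "{..<d}"])
  also have "\<dots> = (\<Sum>g\<in>carrier G. f g * \<rho> (g \<otimes> h) $$ (i,j))"
    using is_rep_entry_mult[OF rep _ h i j] by simp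
  also have "\<dots> = (\<Sum>g\<in>carrier G. f (h \<otimes> g \<otimes> inv h) * \<rho> (h \<otimes> g \<otimes> inv h \<otimes> h) $$ (i,j))"
    using sum_carrier_reindex_conj[OF h, of "\<lambda>g. f g * \<rho> (g \<otimes> h) $$ (i,j)"] by simp
  also have "\<dots> = (\<Sum>g\<in>carrier G. f g * \<rho> (h \<otimes> g) $$ (i,j))"
    by (intro sum.cong refl) (use cls h in \<open>auto simp: m_assoc\<close>)
  also have "\<dots> = (\<Sum>g\<in>carrier G. f g * (\<Sum>c<d. \<rho> h $$ (i,c) * \<rho> g $$ (c,j)))"
    using is_rep_entry_mult[OF rep h _ i j] by simp
  also have "\<dots> = (\<Sum>c<d. \<rho> h $$ (i,c) * (\<Sum>g\<in>carrier G. f g * \<rho> g $$ (c,j)))"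
    by (simp add: sum_distrib_left mult_ac sum.swap[of _ "{..<d}"])
  also have "\<dots> = (\<rho> h * rep_sum G d f \<rho>) $$ (i,j)"
    unfolding index_mult_mat_sum[OF \<rho>[OF h] T i j] by (intro sum.cong refl) (use j in \<open>simp add: rep_sum_def\<close>)
  finally show "(rep_sum G d f \<rho> * \<rho> h) $$ (i,j) = (\<rho> h * rep_sum G d f \<rho>) $$ (i,j)" .
qed (use is_rep_carrier[OF rep h] rep_sum_carrier[of G d f \<rho>] in auto)

lemma mat_trace_mult_rep_sum:
  assumes rep: "is_rep G d \<rho>" and a: "a \<in> carrier G"
  shows "mat_trace (\<rho> a * rep_sum G d f \<rho>) = (\<Sum>b\<in>carrier G. f b * character G \<rho> (a \<otimes> b))"
proof -
  note \<rho> = is_rep_carrier[OF rep]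
  have "mat_trace (\<rho> a * rep_sum G d f \<rho>) = (\<Sum>i<d. \<Sum>l<d. \<rho> a $$ (i,l) * (\<Sum>b\<in>carrier G. f b * \<rho> b $$ (l,i)))"
    unfolding mat_trace_def using is_rep_dim[OF rep a]
    by (intro sum.cong refl) (auto simp: scalar_prod_def lessThan_atLeast0 rep_sum_def intro!: sum.cong)
  also have "\<dots> = (\<Sum>b\<in>carrier G. f b * (\<Sum>i<d. \<Sum>l<d. \<rho> a $$ (i,l) * \<rho> b $$ (l,i)))"
    by (simp add: sum_distrib_left mult_ac sum.swap[of _ "carrier G"])
  also have "\<dots> = (\<Sum>b\<in>carrier G. f b * character G \<rho> (a \<otimes> b))"
    using a by (intro sum.cong refl) (simp add: character_def mat_trace_def is_rep_entry_mult[OF rep] is_rep_dim[OF rep])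
  finally show ?thesis .
qed

lemma rep_sum_irred_eq_0:
  assumes irr: "is_irred_rep G d \<rho>"
    and cls: "\<And>g y. g \<in> carrier G \<Longrightarrow> y \<in> carrier G \<Longrightarrow> f (g \<otimes> y \<otimes> inv g) = f y"
    and orth: "(\<Sum>g\<in>carrier G. f g * character G \<rho> g) = 0"
  shows "rep_sum G d f \<rho> = 0\<^sub>m d d"
proof -
  note rep = is_irred_rep_rep[OF irr]
  obtain c where c: "rep_sum G d f \<rho> = c \<cdot>\<^sub>m 1\<^sub>m d"
    using irred_rep_commuting_scalar[OF irr rep_sum_carrier rep_sum_commute[OF rep _ cls]] .
  have "mat_trace (rep_sum G d f \<rho>) = (\<Sum>g\<in>carrier G. f g * character G \<rho> g)"
    unfolding rep_sum_def mat_trace_def character_def using is_rep_dim[OF rep]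
    by (simp add: sum_distrib_left sum.swap[of _ "carrier G"])
  then have "of_nat d * c = 0" unfolding c orth mat_trace_def by simp
  moreover have "0 < d" using irr unfolding is_irred_rep_def by simp
  ultimately have "c = 0" by simp
  then show ?thesis unfolding c by (intro eq_matI) auto
qed

lemma sum_translate_mult_character:
  fixes c f \<chi> :: "'a \<Rightarrow> complex"
  shows "(\<Sum>k\<in>carrier G. (\<Sum>a\<in>carrier G. c a * f (a \<otimes> k)) * \<chi> k) =
     (\<Sum>a\<in>carrier G. c a * (\<Sum>b\<in>carrier G. f b * \<chi> (inv a \<otimes> b)))"
proof -
  have "(\<Sum>k\<in>carrier G. (\<Sum>a\<in>carrier G. c a * f (a \<otimes> k)) * \<chi> k) =
      (\<Sum>a\<in>carrier G. c a * (\<Sum>k\<in>carrier G. f (a \<otimes> k) * \<chi> k))"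
    by (simp add: sum_distrib_left sum_distrib_right mult.assoc) (rule sum.swap)
  also have "\<dots> = (\<Sum>a\<in>carrier G. c a * (\<Sum>b\<in>carrier G. f b * \<chi> (inv a \<otimes> b)))"
  proof (rule sum.cong[OF refl])
    fix a assume a: "a \<in> carrier G"
    have "(\<Sum>b\<in>carrier G. f b * \<chi> (inv a \<otimes> b)) = (\<Sum>k\<in>carrier G. f (a \<otimes> k) * \<chi> k)"
      using sum_carrier_reindex_mult_left[OF inv_closed[OF a], of "\<lambda>k. f (a \<otimes> k) * \<chi> k"] a
      by (simp add: m_assoc[symmetric])
    then show "c a * (\<Sum>k\<in>carrier G. f (a \<otimes> k) * \<chi> k) = c a * (\<Sum>b\<in>carrier G. f b * \<chi> (inv a \<otimes> b))"
      by simp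
  qed
  finally show ?thesis .
qed

lemma regular_rep_exists:
  assumes fin: "finite (carrier G)"
  obtains R where "is_rep G (card (carrier G)) R"
    "\<And>g. g \<in> carrier G \<Longrightarrow> character G R g = (if g = \<one> then of_nat (card (carrier G)) else 0)"
proof -
  let ?N = "card (carrier G)"
  obtain e where e: "bij_betw e {0..<?N} (carrier G)" using ex_bij_betw_nat_finite[OF fin] by blast
  have ec: "e i \<in> carrier G" if "i < ?N" for i using e that unfolding bij_betw_def by auto
  have einj: "e i = e j \<longleftrightarrow> i = j" if "i < ?N" "j < ?N" for i j
    using e that unfolding bij_betw_def inj_on_def by auto
  have esurj: "\<exists>l<?N. e l = y" if "y \<in> carrier G" for y
    using e that unfolding bij_betw_def by (metis atLeastLessThan_iff imageE)
  define R where "R g = mat ?N ?N (\<lambda>(i,j). if e i = g \<otimes> e j then 1 else (0::complex))" for g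
  have "is_rep G ?N R" unfolding is_rep_def
  proof (intro conjI ballI)
    show "R \<one> = 1\<^sub>m ?N" unfolding R_def by (intro eq_matI) (auto simp: ec einj)
    fix g h assume g: "g \<in> carrier G" and h: "h \<in> carrier G"
    show "R (g \<otimes> h) = R g * R h"
    proof (rule eq_matI)
      fix i j assume "i < dim_row (R g * R h)" "j < dim_col (R g * R h)"
      then have i: "i < ?N" and j: "j < ?N" unfolding R_def by auto
      obtain l0 where l0: "l0 < ?N" "e l0 = h \<otimes> e j" using esurj[of "h \<otimes> e j"] h ec[OF j] by auto
      have "(R g * R h) $$ (i,j) = (\<Sum>l<?N. (if e i = g \<otimes> e l then 1 else 0) * (if e l = h \<otimes> e j then 1 else 0))"
        unfolding R_def using i j by (simp add: scalar_prod_def lessThan_atLeast0)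
      also have "\<dots> = (\<Sum>l<?N. if l = l0 then (if e i = g \<otimes> (h \<otimes> e j) then 1 else 0) else 0)"
        using l0 einj by (intro sum.cong refl) (auto simp: l0(2)[symmetric])
      also have "\<dots> = R (g \<otimes> h) $$ (i,j)" unfolding R_def using i j g h ec[OF j] l0 by (simp add: m_assoc)
      finally show "R (g \<otimes> h) $$ (i,j) = (R g * R h) $$ (i,j)" by simp
    qed (auto simp: R_def)
  qed (auto simp: R_def)
  moreover have "character G R g = (if g = \<one> then of_nat ?N else 0)" if g: "g \<in> carrier G" for g
  proof -
    have "character G R g = (\<Sum>i<?N. if e i = g \<otimes> e i then 1 else 0)"
      unfolding character_def mat_trace_def R_def using g by simp
    also have "\<dots> = (\<Sum>i<?N. if g = \<one> then 1 else 0)"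
      using ec g by (intro sum.cong refl) auto
    finally show ?thesis by simp
  qed
  ultimately show ?thesis by (rule that)
qed

text \<open>The convolution \<open>u = f\<^sup>* * f\<close> has vanishing sums against all characters: against an
  irreducible one they are traces of \<open>\<rho>(a) \<Sum> f(g) \<rho>(g)\<close>, and Schur's lemma kills the second
  factor. Taking the regular character isolates \<open>u(1) = \<Sum> |f|\<^sup>2\<close>.\<close>

theorem class_function_orth_Irr_eq_0:
  assumes fin: "finite (carrier G)"
    and cls: "\<And>g y. g \<in> carrier G \<Longrightarrow> y \<in> carrier G \<Longrightarrow> f (g \<otimes> y \<otimes> inv g) = f y"
    and orth: "\<And>\<chi>. \<chi> \<in> Irr G \<Longrightarrow> (\<Sum>g\<in>carrier G. f g * \<chi> g) = 0"
    and x: "x \<in> carrier G"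
  shows "f x = 0"
proof -
  define u where "u k = (\<Sum>a\<in>carrier G. cnj (f a) * f (a \<otimes> k))" for k
  have u_orth: "(\<Sum>k\<in>carrier G. u k * \<chi> k) = 0" if \<chi>_Irr: "\<chi> \<in> Irr G" for \<chi>
  proof -
    obtain d \<rho> where irr: "is_irred_rep G d \<rho>" and \<chi>: "\<chi> = character G \<rho>"
      using Irr_obtain[OF \<chi>_Irr] .
    have "(\<Sum>g\<in>carrier G. f g * character G \<rho> g) = 0" using orth[OF \<chi>_Irr] unfolding \<chi> .
    then have "rep_sum G d f \<rho> = 0\<^sub>m d d" using rep_sum_irred_eq_0[OF irr cls] by blast
    then have "(\<Sum>b\<in>carrier G. f b * \<chi> (inv a \<otimes> b)) = 0" if "a \<in> carrier G" for a
      using mat_trace_mult_rep_sum[OF is_irred_rep_rep[OF irr] inv_closed[OF that], of f] \<chi>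
        is_rep_carrier[OF is_irred_rep_rep[OF irr] inv_closed[OF that]] by (simp add: mat_trace_def)
    then show ?thesis unfolding u_def sum_translate_mult_character[of "\<lambda>a. cnj (f a)" f \<chi>] by simp
  qed
  obtain R where R: "is_rep G (card (carrier G)) R"
    and chR: "\<And>g. g \<in> carrier G \<Longrightarrow> character G R g = (if g = \<one> then of_nat (card (carrier G)) else 0)"
    using regular_rep_exists[OF fin] by blast
  have "(\<Sum>k\<in>carrier G. u k * character G R k) = 0" by (rule sum_mult_character_eq_0[OF u_orth R])
  moreover have "(\<Sum>k\<in>carrier G. u k * character G R k) =
      (\<Sum>k\<in>carrier G. if k = \<one> then u \<one> * of_nat (card (carrier G)) else 0)"
    using chR by (intro sum.cong refl) auto
  moreover have "\<dots> = u \<one> * of_nat (card (carrier G))" using fin by simp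
  moreover have "card (carrier G) > 0" by (rule card_carrier_pos[OF fin])
  ultimately have "u \<one> = 0" by simp
  moreover have "u \<one> = of_real (\<Sum>a\<in>carrier G. (cmod (f a))\<^sup>2)"
  proof -
    have "u \<one> = (\<Sum>a\<in>carrier G. of_real ((cmod (f a))\<^sup>2))"
      unfolding u_def by (intro sum.cong refl) (subst complex_norm_square, simp add: mult.commute)
    then show ?thesis by simp
  qed
  ultimately have "(\<Sum>a\<in>carrier G. (cmod (f a))\<^sup>2) = 0" by (metis of_real_eq_0_iff)
  then show ?thesis using fin x by (simp add: sum_nonneg_eq_0_iff)
qed

corollary class_function_eq_0:
  assumes fin: "finite (carrier G)"
    and cls: "\<And>g y. g \<in> carrier G \<Longrightarrow> y \<in> carrier G \<Longrightarrow> f (g \<otimes> y \<otimes> inv g) = f y"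
    and orth: "\<And>\<chi>. \<chi> \<in> Irr G \<Longrightarrow> char_pairing G f \<chi> = 0"
    and x: "x \<in> carrier G"
  shows "f x = 0"
proof -
  have cls': "f (inv (g \<otimes> y \<otimes> inv g)) = f (inv y)" if g: "g \<in> carrier G" and y: "y \<in> carrier G" for g y
  proof -
    have "inv (g \<otimes> y \<otimes> inv g) = g \<otimes> inv y \<otimes> inv g" using g y by (simp add: inv_mult_group m_assoc)
    then show ?thesis using cls[OF g inv_closed[OF y]] by simp
  qed
  have orth': "(\<Sum>g\<in>carrier G. f (inv g) * \<chi> g) = 0" if "\<chi> \<in> Irr G" for \<chi>
    using orth[OF that] sum_carrier_reindex_inv[of "\<lambda>g. f (inv g) * \<chi> g"] unfolding char_pairing_def by simp
  show ?thesis
    using class_function_orth_Irr_eq_0[where f = "\<lambda>g. f (inv g)", OF fin cls' orth' inv_closed[OF x]] x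
    by simp
qed

end

section \<open>Values of characters\<close>

lemma upper_triangular_mult:
  fixes X Y :: "complex mat"
  assumes X: "X \<in> carrier_mat d d" and Y: "Y \<in> carrier_mat d d"
    and uX: "upper_triangular X" and uY: "upper_triangular Y"
  shows "upper_triangular (X * Y)" "\<And>i. i < d \<Longrightarrow> (X * Y) $$ (i,i) = X $$ (i,i) * Y $$ (i,i)"
proof -
  have X0: "X $$ (i,l) = 0" if "l < i" "i < d" for i l using uX that X unfolding upper_triangular_def by auto
  have Y0: "Y $$ (i,l) = 0" if "l < i" "i < d" for i l using uY that Y unfolding upper_triangular_def by auto
  show "upper_triangular (X * Y)"
    unfolding upper_triangular_def
  proof (intro allI impI)
    fix i j assume i: "i < dim_row (X * Y)" and j: "j < i"
    hence i: "i < d" using X by simp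
    have "(X * Y) $$ (i,j) = (\<Sum>l<d. X $$ (i,l) * Y $$ (l,j))"
      by (rule index_mult_mat_sum[OF X Y i]) (use i j in simp)
    also have "\<dots> = 0"
    proof (rule sum.neutral, intro ballI)
      fix l assume l: "l \<in> {..<d}"
      show "X $$ (i,l) * Y $$ (l,j) = 0"
      proof (cases "l < i")
        case True thus ?thesis using X0[OF True i] by simp
      next
        case False thus ?thesis using Y0[of j l] j l by simp
      qed
    qed
    finally show "(X * Y) $$ (i,j) = 0" .
  qed
  fix i assume i: "i < d"
  have "(X * Y) $$ (i,i) = (\<Sum>l<d. X $$ (i,l) * Y $$ (l,i))"
    by (rule index_mult_mat_sum[OF X Y i i])
  also have "\<dots> = (\<Sum>l<d. if l = i then X $$ (i,i) * Y $$ (i,i) else 0)"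
  proof (intro sum.cong refl)
    fix l assume l: "l \<in> {..<d}"
    show "X $$ (i,l) * Y $$ (l,i) = (if l = i then X $$ (i,i) * Y $$ (i,i) else 0)"
    proof (cases "l < i")
      case True thus ?thesis using X0[OF True i] by simp
    next
      case False
      show ?thesis
      proof (cases "l = i")
        case False': False
        hence "i < l" using False by simp
        thus ?thesis using Y0[of i l] l False' by simp
      qed simp
    qed
  qed
  also have "\<dots> = X $$ (i,i) * Y $$ (i,i)" using i by simp
  finally show "(X * Y) $$ (i,i) = X $$ (i,i) * Y $$ (i,i)" .
qed

lemma upper_triangular_pow:
  fixes B :: "complex mat"
  assumes B: "B \<in> carrier_mat d d" and uB: "upper_triangular B"
  shows "upper_triangular (B ^\<^sub>m k) \<and> (\<forall>i<d. (B ^\<^sub>m k) $$ (i,i) = (B $$ (i,i)) ^ k)"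
proof (induction k)
  case 0
  show ?case using B by auto
next
  case (Suc k)
  have Bk: "B ^\<^sub>m k \<in> carrier_mat d d" using B by (rule pow_carrier_mat)
  have "B ^\<^sub>m Suc k = B ^\<^sub>m k * B" by simp
  then show ?case using upper_triangular_mult[OF Bk B _ uB] Suc by auto
qed

lemma (in group) character_pow_eigenvalues:
  assumes rep: "is_rep G d \<rho>" and g: "g \<in> carrier G" and gn: "g [^] n = \<one>"
  obtains lam where "\<forall>i<d. lam i ^ n = 1" "\<forall>k. character G \<rho> (g [^] k) = (\<Sum>i<d. lam i ^ k)"
proof -
  have A: "\<rho> g \<in> carrier_mat d d" using is_rep_carrier[OF rep g] .
  obtain es where "char_poly (\<rho> g) = (\<Prod>a\<leftarrow>es. [:- a, 1:])" using char_poly_factorized[OF A] by blast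
  from schur_decomposition_exists[OF A this] obtain B
    where B: "B \<in> carrier_mat d d" and uB: "upper_triangular B" and "similar_mat (\<rho> g) B"
    by blast
  then obtain P Q where wit: "similar_mat_wit (\<rho> g) B P Q" unfolding similar_mat_def by blast
  have P: "P \<in> carrier_mat d d" and Q: "Q \<in> carrier_mat d d" and QP: "Q * P = 1\<^sub>m d"
    using similar_mat_witD2[OF A wit] by simp_all
  have Bk: "B ^\<^sub>m k \<in> carrier_mat d d" for k using B by (rule pow_carrier_mat)
  have pw: "\<rho> (g [^] k) = P * B ^\<^sub>m k * Q" for k
    unfolding is_rep_pow[OF rep g] by (rule similar_mat_wit_pow_id[OF wit])
  define lam where "lam i = B $$ (i,i)" for i
  have tr: "character G \<rho> (g [^] k) = (\<Sum>i<d. lam i ^ k)" for k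
  proof -
    have "character G \<rho> (g [^] k) = mat_trace (B ^\<^sub>m k)"
      using g pw mat_trace_conj[OF P Bk Q QP] by (simp add: character_def)
    also have "\<dots> = (\<Sum>i<d. lam i ^ k)" unfolding mat_trace_def lam_def
      using Bk[of k] upper_triangular_pow[OF B uB, of k] by (intro sum.cong) auto
    finally show ?thesis .
  qed
  have "B ^\<^sub>m n = (Q * P) * B ^\<^sub>m n * (Q * P)"
    using QP left_mult_one_mat[OF Bk[of n]] right_mult_one_mat[OF Bk[of n]] by simp
  also have "\<dots> = Q * \<rho> (g [^] n) * P"
    unfolding pw using P Q Bk[of n] by (simp add: assoc_mult_mat[of _ d d _ d _ d])
  also have "\<dots> = 1\<^sub>m d" using gn is_rep_one[OF rep] P Q QP by simp
  finally have Bn: "B ^\<^sub>m n = 1\<^sub>m d" .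
  have "lam i ^ n = 1" if "i < d" for i
    using upper_triangular_pow[OF B uB, of n] Bn that unfolding lam_def by auto
  then have "\<forall>i<d. lam i ^ n = 1" by blast
  moreover have "\<forall>k. character G \<rho> (g [^] k) = (\<Sum>i<d. lam i ^ k)" using tr by blast
  ultimately show ?thesis by (rule that)
qed

lemma root_of_unity_prim_root_pow:
  assumes n: "0 < n" and z: "z ^ n = (1::complex)"
  obtains m where "z = prim_root n ^ m"
proof -
  obtain k where "z = cis (2 * pi * real k / real n)"
    using z bij_betw_roots_unity[OF n] unfolding bij_betw_def by auto
  also have "\<dots> = prim_root n ^ k" unfolding prim_root_def by (simp add: DeMoivre field_simps)
  finally show ?thesis by (rule that)
qed

lemma prim_root_pow_in_cyclotomic_field: "prim_root n ^ m \<in> cyclotomic_field n"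
  unfolding cyclotomic_field_def
  by (rule CollectI, rule exI[of _ "Polynomial.monom 1 m"]) (simp add: poly_monom coeff_monom)

lemma cyclotomic_field_zero: "0 \<in> cyclotomic_field n"
  unfolding cyclotomic_field_def by (rule CollectI, rule exI[of _ 0]) simp

lemma cyclotomic_field_add:
  assumes "a \<in> cyclotomic_field n" "b \<in> cyclotomic_field n"
  shows "a + b \<in> cyclotomic_field n"
proof -
  obtain p q where "a = poly p (prim_root n)" "\<forall>i. Polynomial.coeff p i \<in> \<rat>"
    "b = poly q (prim_root n)" "\<forall>i. Polynomial.coeff q i \<in> \<rat>"
    using assms unfolding cyclotomic_field_def by auto
  then show ?thesis unfolding cyclotomic_field_def by (intro CollectI exI[of _ "p + q"]) auto
qed

lemma galois_auto_sum:
  fixes d :: nat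
  assumes \<sigma>: "is_galois_auto n \<sigma>" and a: "\<And>i. i < d \<Longrightarrow> a i \<in> cyclotomic_field n"
  shows "\<sigma> (\<Sum>i<d. a i) = (\<Sum>i<d. \<sigma> (a i))"
proof -
  have "\<sigma> (0 + 0) = \<sigma> 0 + \<sigma> 0"
    using \<sigma> cyclotomic_field_zero unfolding is_galois_auto_def by blast
  then have \<sigma>0: "\<sigma> 0 = 0" by simp
  have "(\<Sum>i<d. a i) \<in> cyclotomic_field n \<and> \<sigma> (\<Sum>i<d. a i) = (\<Sum>i<d. \<sigma> (a i))"
    using a
  proof (induction d)
    case (Suc d)
    have IH: "(\<Sum>i<d. a i) \<in> cyclotomic_field n" "\<sigma> (\<Sum>i<d. a i) = (\<Sum>i<d. \<sigma> (a i))"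
      using Suc by auto
    moreover have "a d \<in> cyclotomic_field n" using Suc.prems by simp
    ultimately show ?case using \<sigma> cyclotomic_field_add unfolding is_galois_auto_def by simp
  qed (simp add: \<sigma>0 cyclotomic_field_zero)
  then show ?thesis ..
qed

lemma galois_auto_prim_root_pow:
  assumes \<sigma>: "is_galois_auto n \<sigma>" and r: "\<sigma> (prim_root n) = prim_root n ^ r"
  shows "\<sigma> (prim_root n ^ m) = (prim_root n ^ m) ^ r"
proof (induction m)
  case 0
  then show ?case using \<sigma> unfolding is_galois_auto_def by simp
next
  case (Suc m)
  have "\<sigma> (prim_root n ^ Suc m) = \<sigma> (prim_root n ^ m * prim_root n)" by (simp add: mult.commute)
  also have "\<dots> = \<sigma> (prim_root n ^ m) * \<sigma> (prim_root n)"
    using \<sigma> prim_root_pow_in_cyclotomic_field[of n m] prim_root_pow_in_cyclotomic_field[of n 1]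
    unfolding is_galois_auto_def by simp
  finally show ?case using Suc r by (simp add: power_mult_distrib mult.commute)
qed

context group
begin

lemma character_galois:
  assumes rep: "is_rep G d \<rho>" and g: "g \<in> carrier G" and n: "0 < n" and gn: "g [^] n = \<one>"
    and \<sigma>: "is_galois_auto n \<sigma>" and r: "\<sigma> (prim_root n) = prim_root n ^ r"
  shows "\<sigma> (character G \<rho> g) = character G \<rho> (g [^] r)"
proof -
  obtain lam where lam1: "\<forall>i<d. lam i ^ n = 1"
    and tr: "\<forall>k. character G \<rho> (g [^] k) = (\<Sum>i<d. lam i ^ k)"
    using character_pow_eigenvalues[OF rep g gn] .
  define m where "m i = (SOME m. lam i = prim_root n ^ m)" for i
  have m: "lam i = prim_root n ^ m i" if i: "i < d" for i
  proof -
    obtain k where "lam i = prim_root n ^ k" using root_of_unity_prim_root_pow[OF n lam1[rule_format, OF i]] .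
    then show ?thesis unfolding m_def by (rule someI)
  qed
  have "character G \<rho> g = (\<Sum>i<d. prim_root n ^ m i)"
    using tr[rule_format, of 1] g m by simp
  then have "\<sigma> (character G \<rho> g) = (\<Sum>i<d. \<sigma> (prim_root n ^ m i))"
    using galois_auto_sum[OF \<sigma>, of d "\<lambda>i. prim_root n ^ m i"] prim_root_pow_in_cyclotomic_field
    by simp
  also have "\<dots> = (\<Sum>i<d. lam i ^ r)" using m by (simp add: galois_auto_prim_root_pow[OF \<sigma> r])
  also have "\<dots> = character G \<rho> (g [^] r)" by (rule tr[rule_format, symmetric])
  finally show ?thesis .
qed

lemma character_inv:
  assumes fin: "finite (carrier G)" and rep: "is_rep G d \<rho>" and g: "g \<in> carrier G"
  shows "character G \<rho> (inv g) = cnj (character G \<rho> g)"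
proof -
  define n where "n = order G"
  have n: "0 < n" unfolding n_def order_def by (rule card_carrier_pos[OF fin])
  have gn: "g [^] n = \<one>" unfolding n_def by (rule pow_order_eq_1[OF g])
  obtain lam where lam1: "\<forall>i<d. lam i ^ n = 1"
    and tr: "\<forall>k. character G \<rho> (g [^] k) = (\<Sum>i<d. lam i ^ k)"
    using character_pow_eigenvalues[OF rep g gn] .
  have cnj_lam: "cnj (lam i) = lam i ^ (n - 1)" if "i < d" for i
  proof -
    have c2: "lam i * lam i ^ (n - 1) = 1" using lam1[rule_format, OF that] n by (metis Suc_diff_1 power_Suc)
    have "cmod (lam i) = 1" using power_eq_1_iff[OF lam1[rule_format, OF that]] n by simp
    then have c1: "lam i * cnj (lam i) = 1" using complex_norm_square[of "lam i"] by simp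
    have "lam i \<noteq> 0" using c1 by auto
    then show ?thesis using c1 c2 by (metis mult_left_cancel)
  qed
  have ig: "inv g = g [^] (n - 1)"
  proof (rule inv_equality)
    show "g [^] (n - 1) \<otimes> g = \<one>" using gn n g by (metis Suc_diff_1 nat_pow_Suc)
  qed (use g in auto)
  have "cnj (character G \<rho> g) = (\<Sum>i<d. cnj (lam i))" using tr[rule_format, of 1] g by simp
  also have "\<dots> = (\<Sum>i<d. lam i ^ (n - 1))" using cnj_lam by simp
  also have "\<dots> = character G \<rho> (inv g)" unfolding ig by (rule tr[rule_format, symmetric])
  finally show ?thesis by simp
qed

lemma Irr_inv:
  assumes fin: "finite (carrier G)" and "\<chi> \<in> Irr G" "g \<in> carrier G"
  shows "\<chi> (inv g) = cnj (\<chi> g)"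
proof -
  obtain d \<rho> where irr: "is_irred_rep G d \<rho>" and \<chi>: "\<chi> = character G \<rho>" using Irr_obtain[OF assms(2)] .
  show ?thesis unfolding \<chi> by (rule character_inv[OF fin is_irred_rep_rep[OF irr] assms(3)])
qed

lemma
  assumes "finite (carrier G)"
  shows group_exponent_pos: "0 < group_exponent G"
    and pow_group_exponent: "x \<in> carrier G \<Longrightarrow> x [^] group_exponent G = \<one>"
proof -
  have "0 < order G" unfolding order_def by (rule card_carrier_pos[OF assms])
  moreover have "\<forall>x\<in>carrier G. x [^] order G = \<one>" using pow_order_eq_1 by blast
  ultimately have "0 < order G \<and> (\<forall>x\<in>carrier G. x [^] order G = \<one>)" ..
  then have "\<exists>n::nat. 0 < n \<and> (\<forall>x\<in>carrier G. x [^] n = \<one>)" by (rule exI)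
  then have "0 < group_exponent G \<and> (\<forall>x\<in>carrier G. x [^] group_exponent G = \<one>)"
    unfolding group_exponent_def by (rule LeastI_ex)
  then show "0 < group_exponent G" and "x \<in> carrier G \<Longrightarrow> x [^] group_exponent G = \<one>" by auto
qed

lemma gal_act_Irr:
  assumes fin: "finite (carrier G)" and \<sigma>: "is_galois_auto (group_exponent G) \<sigma>"
    and r: "\<sigma> (prim_root (group_exponent G)) = prim_root (group_exponent G) ^ r"
    and \<chi>: "\<chi> \<in> Irr G" and x: "x \<in> carrier G"
  shows "gal_act G \<sigma> \<chi> x = \<chi> (x [^] r)"
proof -
  obtain d \<rho> where irr: "is_irred_rep G d \<rho>" and \<chi>_def: "\<chi> = character G \<rho>" using Irr_obtain[OF \<chi>] .
  show ?thesis
    using character_galois[OF is_irred_rep_rep[OF irr] x group_exponent_pos[OF fin]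
        pow_group_exponent[OF fin x] \<sigma> r] x
    unfolding \<chi>_def gal_act_def by simp
qed

end

section \<open>Conjugacy classes\<close>

context group
begin

lemma conj_class_subset: "x \<in> carrier G \<Longrightarrow> conj_class G x \<subseteq> carrier G"
  unfolding conj_class_def by auto

lemma conj_class_self:
  assumes x: "x \<in> carrier G"
  shows "x \<in> conj_class G x"
proof -
  have "x = \<one> \<otimes> x \<otimes> inv \<one>" using x by simp
  then show ?thesis unfolding conj_class_def by blast
qed

lemma conj_in_conj_class_iff:
  assumes x: "x \<in> carrier G" and g: "g \<in> carrier G" and w: "w \<in> carrier G"
  shows "g \<otimes> w \<otimes> inv g \<in> conj_class G x \<longleftrightarrow> w \<in> conj_class G x"
proof
  assume "g \<otimes> w \<otimes> inv g \<in> conj_class G x"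
  then obtain h where h: "h \<in> carrier G" and e: "g \<otimes> w \<otimes> inv g = h \<otimes> x \<otimes> inv h"
    unfolding conj_class_def by auto
  have "w = inv g \<otimes> (g \<otimes> w \<otimes> inv g) \<otimes> g" using g w by (simp add: m_assoc[symmetric]) (simp add: m_assoc)
  also have "\<dots> = (inv g \<otimes> h) \<otimes> x \<otimes> inv (inv g \<otimes> h)"
    unfolding e using g h x by (simp add: m_assoc inv_mult_group)
  finally show "w \<in> conj_class G x" unfolding conj_class_def using g h by blast
next
  assume "w \<in> conj_class G x"
  then obtain h where h: "h \<in> carrier G" and e: "w = h \<otimes> x \<otimes> inv h"
    unfolding conj_class_def by auto
  have "g \<otimes> w \<otimes> inv g = (g \<otimes> h) \<otimes> x \<otimes> inv (g \<otimes> h)"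
    unfolding e using g h x by (simp add: m_assoc inv_mult_group)
  then show "g \<otimes> w \<otimes> inv g \<in> conj_class G x" unfolding conj_class_def using g h by blast
qed

lemma conj_class_eq:
  assumes x: "x \<in> carrier G" and y: "y \<in> carrier G" and xy: "x \<in> conj_class G y"
  shows "conj_class G x = conj_class G y"
proof -
  obtain h where h: "h \<in> carrier G" and e: "x = h \<otimes> y \<otimes> inv h" using xy unfolding conj_class_def by auto
  show ?thesis
  proof
    show "conj_class G x \<subseteq> conj_class G y"
    proof
      fix w assume "w \<in> conj_class G x"
      then obtain g where g: "g \<in> carrier G" and w: "w = g \<otimes> x \<otimes> inv g" unfolding conj_class_def by auto
      have "w = (g \<otimes> h) \<otimes> y \<otimes> inv (g \<otimes> h)" unfolding w e using g h y by (simp add: m_assoc inv_mult_group)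
      then show "w \<in> conj_class G y" unfolding conj_class_def using g h by blast
    qed
    show "conj_class G y \<subseteq> conj_class G x"
    proof
      fix w assume "w \<in> conj_class G y"
      then obtain g where g: "g \<in> carrier G" and w: "w = g \<otimes> y \<otimes> inv g" unfolding conj_class_def by auto
      have "y = inv h \<otimes> x \<otimes> h" unfolding e using h y by (simp add: m_assoc[symmetric]) (simp add: m_assoc)
      then have "w = (g \<otimes> inv h) \<otimes> x \<otimes> inv (g \<otimes> inv h)" unfolding w using g h x by (simp add: m_assoc inv_mult_group)
      then show "w \<in> conj_class G x" unfolding conj_class_def using g h by blast
    qed
  qed
qed

lemma card_conj_class_mult_centralizer:
  assumes x: "x \<in> carrier G"
  shows "card (conj_class G x) * card (centralizer G x) = card (carrier G)"
proof -
  let ?\<phi> = "\<lambda>g. \<lambda>h\<in>carrier G. g \<otimes> h \<otimes> inv g"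
  interpret conj: group_action G "carrier G" ?\<phi> by (rule action_by_conjugation)
  have "orbit G ?\<phi> x = conj_class G x" unfolding orbit_def conj_class_def using x by auto
  moreover have "g \<otimes> x \<otimes> inv g = x \<longleftrightarrow> g \<otimes> x = x \<otimes> g" if g: "g \<in> carrier G" for g
  proof
    assume "g \<otimes> x \<otimes> inv g = x"
    then have "g \<otimes> x \<otimes> inv g \<otimes> g = x \<otimes> g" by simp
    then show "g \<otimes> x = x \<otimes> g" using g x by (simp add: m_assoc)
  next
    assume "g \<otimes> x = x \<otimes> g"
    then have "g \<otimes> x \<otimes> inv g = x \<otimes> g \<otimes> inv g" by simp
    then show "g \<otimes> x \<otimes> inv g = x" using g x by (simp add: m_assoc)
  qed
  then have "stabilizer G ?\<phi> x = centralizer G x"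
    unfolding stabilizer_def centralizer_def using x by auto
  ultimately show ?thesis using conj.orbit_stabilizer_theorem[OF x] unfolding order_def by simp
qed

lemma char_pairing_conj_class_indicator:
  assumes fin: "finite (carrier G)" and z: "z \<in> carrier G"
    and cls: "\<And>g w. g \<in> carrier G \<Longrightarrow> w \<in> carrier G \<Longrightarrow> \<chi> (g \<otimes> w \<otimes> inv g) = \<chi> w"
  shows "char_pairing G (\<lambda>w. if w \<in> conj_class G z then 1 else 0) \<chi> =
    of_nat (card (conj_class G z)) * \<chi> (inv z)"
proof -
  have "char_pairing G (\<lambda>w. if w \<in> conj_class G z then 1 else 0) \<chi> =
      (\<Sum>w\<in>carrier G. if w \<in> conj_class G z then \<chi> (inv w) else 0)"
    unfolding char_pairing_def by (intro sum.cong refl) simp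
  also have "\<dots> = (\<Sum>w\<in>conj_class G z. \<chi> (inv w))"
    using sum.inter_restrict[OF fin, of "\<lambda>w. \<chi> (inv w)" "conj_class G z"] conj_class_subset[OF z]
    by (simp add: Int_absorb1 Int_commute)
  also have "\<dots> = (\<Sum>w\<in>conj_class G z. \<chi> (inv z))"
  proof (intro sum.cong refl)
    fix w assume "w \<in> conj_class G z"
    then obtain g where g: "g \<in> carrier G" and w: "w = g \<otimes> z \<otimes> inv g" unfolding conj_class_def by auto
    have "inv w = g \<otimes> inv z \<otimes> inv g" unfolding w using g z by (simp add: inv_mult_group m_assoc)
    then show "\<chi> (inv w) = \<chi> (inv z)" using cls g z by simp
  qed
  finally show ?thesis by simp
qed

end

text \<open>The class function \<open>h\<close> below is orthogonal to all irreducible characters, hence zero,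
  and \<open>h(x) = 0\<close> is the claimed identity.\<close>

lemma (in group) card_centralizer_eq_sum_over_separating_characters:
  assumes fin: "finite (carrier G)" and X: "X \<subseteq> Irr G" "finite X"
    and x: "x \<in> carrier G" and y: "y \<in> carrier G" and xy: "x \<notin> conj_class G y"
    and agree: "\<And>\<chi>. \<chi> \<in> Irr G \<Longrightarrow> \<chi> \<notin> X \<Longrightarrow> \<chi> y = \<chi> x"
  shows "(\<Sum>\<psi>\<in>X. \<psi> x * cnj (\<psi> x - \<psi> y)) = of_nat (card (centralizer G x))"
proof -
  let ?N = "of_nat (card (carrier G)) :: complex"
  have N0: "?N \<noteq> 0" using card_carrier_pos[OF fin] by simp
  have class0: "of_nat (card (conj_class G z)) \<noteq> (0::complex)" if "z \<in> carrier G" for z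
    using finite_subset[OF conj_class_subset[OF that] fin] conj_class_self[OF that]
    by (auto simp: card_gt_0_iff)
  define \<delta> where "\<delta> z w = (if w \<in> conj_class G z then 1 else (0::complex))" for z w
  define a where "a z = (1 / of_nat (card (conj_class G z)) :: complex)" for z
  define c where "c \<psi> = (cnj (\<psi> x) - cnj (\<psi> y)) / ?N" for \<psi> :: "'a \<Rightarrow> complex"
  define h where "h = (\<lambda>w. a x * \<delta> x w - a y * \<delta> y w - (\<Sum>\<psi>\<in>X. c \<psi> * \<psi> w))"
  have "h (g \<otimes> w \<otimes> inv g) = h w" if "g \<in> carrier G" "w \<in> carrier G" for g w
  proof -
    have "(\<Sum>\<psi>\<in>X. c \<psi> * \<psi> (g \<otimes> w \<otimes> inv g)) = (\<Sum>\<psi>\<in>X. c \<psi> * \<psi> w)"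
      using X(1) Irr_conj that by (intro sum.cong) auto
    then show ?thesis unfolding h_def \<delta>_def
      using conj_in_conj_class_iff[OF x that] conj_in_conj_class_iff[OF y that] by simp
  qed
  moreover have "char_pairing G h \<chi> = 0" if \<chi>: "\<chi> \<in> Irr G" for \<chi>
  proof -
    have \<delta>: "a z * char_pairing G (\<delta> z) \<chi> = cnj (\<chi> z)" if "z \<in> carrier G" for z
      using char_pairing_conj_class_indicator[OF fin that Irr_conj[OF \<chi>]] Irr_inv[OF fin \<chi> that]
        class0[OF that] unfolding a_def \<delta>_def by simp
    have "(\<Sum>\<psi>\<in>X. c \<psi> * char_pairing G \<psi> \<chi>) = (\<Sum>\<psi>\<in>X. if \<psi> = \<chi> then c \<chi> * ?N else 0)"
      using X(1) char_pairing_Irr[OF fin _ \<chi>] by (intro sum.cong) auto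
    also have "\<dots> = cnj (\<chi> x) - cnj (\<chi> y)"
      using X(2) agree[OF \<chi>] N0 unfolding c_def by (cases "\<chi> \<in> X") auto
    finally show ?thesis
      unfolding h_def char_pairing_diff char_pairing_scale char_pairing_sum \<delta>[OF x] \<delta>[OF y] by simp
  qed
  ultimately have "h x = 0" by (rule class_function_eq_0[where f = h, OF fin _ _ x])
  then have hx: "(\<Sum>\<psi>\<in>X. c \<psi> * \<psi> x) = a x"
    unfolding h_def \<delta>_def using conj_class_self[OF x] xy by simp
  have "(\<Sum>\<psi>\<in>X. \<psi> x * cnj (\<psi> x - \<psi> y)) = ?N * (\<Sum>\<psi>\<in>X. c \<psi> * \<psi> x)"
    unfolding c_def sum_distrib_left using N0 by (intro sum.cong refl) (simp add: field_simps)
  also have "\<dots> = of_nat (card (centralizer G x))"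
    using card_conj_class_mult_centralizer[OF x] class0[OF x] unfolding hx a_def
    by (simp add: field_simps flip: of_nat_mult)
  finally show ?thesis .
qed

lemma pair_sum_eq_norm_square:
  fixes z w :: complex
  shows "z * cnj (z - w) + w * cnj (w - z) = of_real ((cmod (z - w))\<^sup>2)"
proof -
  have "z * cnj (z - w) + w * cnj (w - z) = (z - w) * cnj (z - w)" by (simp add: algebra_simps)
  then show ?thesis by (simp only: complex_norm_square)
qed

lemma sum_swapped_pairs_eq_norm_squares:
  fixes f g :: "'a \<Rightarrow> complex"
  assumes card: "card {a, a', b, b'} = 4"
    and swap: "g a = f a'" "g a' = f a" "g b = f b'" "g b' = f b"
  shows "(\<Sum>\<psi>\<in>{a, a', b, b'}. f \<psi> * cnj (f \<psi> - g \<psi>)) =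
    of_real ((cmod (f a - f a'))\<^sup>2 + (cmod (f b - f b'))\<^sup>2)"
proof -
  have "a \<noteq> a'" "a \<noteq> b" "a \<noteq> b'" "a' \<noteq> b" "a' \<noteq> b'" "b \<noteq> b'"
    using card by (auto simp: card_insert_if split: if_splits)
  then have "(\<Sum>\<psi>\<in>{a, a', b, b'}. f \<psi> * cnj (f \<psi> - g \<psi>)) =
      (f a * cnj (f a - f a') + f a' * cnj (f a' - f a)) + (f b * cnj (f b - f b') + f b' * cnj (f b' - f b))"
    using swap by (simp add: add.assoc)
  also have "\<dots> = of_real ((cmod (f a - f a'))\<^sup>2 + (cmod (f b - f b'))\<^sup>2)"
    unfolding pair_sum_eq_norm_square of_real_add ..
  finally show ?thesis .
qed

theorem mainTheorem10:
  fixes G :: "('a, 'b) monoid_scheme"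
    and \<sigma> :: "complex \<Rightarrow> complex"
    and n r :: nat
    and \<chi>1 \<chi>2 :: "'a \<Rightarrow> complex"
    and x :: 'a
  assumes "group G" and "finite (carrier G)"
    and "n = group_exponent G"
    and "is_galois_auto n \<sigma>"
    and "\<sigma> (prim_root n) = prim_root n ^ r"
    and "\<chi>1 \<in> Irr G" and "\<chi>2 \<in> Irr G"
    and "{\<chi> \<in> Irr G. gal_act G \<sigma> \<chi> \<noteq> \<chi>} = {\<chi>1, gal_act G \<sigma> \<chi>1, \<chi>2, gal_act G \<sigma> \<chi>2}"
    and "card {\<chi> \<in> Irr G. gal_act G \<sigma> \<chi> \<noteq> \<chi>} = 4"
    and "gal_act G \<sigma> (gal_act G \<sigma> \<chi>1) = \<chi>1"
    and "gal_act G \<sigma> (gal_act G \<sigma> \<chi>2) = \<chi>2"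
    and "x \<in> carrier G"
    and "conj_class G (x [^]\<^bsub>G\<^esub> r) \<noteq> conj_class G x"
  shows "real (card (centralizer G x)) =
           (cmod (\<chi>1 x - gal_act G \<sigma> \<chi>1 x))\<^sup>2 + (cmod (\<chi>2 x - gal_act G \<sigma> \<chi>2 x))\<^sup>2"
proof -
  interpret group G by fact
  note fin = assms(2) and x = assms(12)
  define X where "X = {\<chi> \<in> Irr G. gal_act G \<sigma> \<chi> \<noteq> \<chi>}"
  define y where "y = x [^]\<^bsub>G\<^esub> r"
  have y: "y \<in> carrier G" unfolding y_def using x by simp
  have gal: "\<chi> y = gal_act G \<sigma> \<chi> x" if "\<chi> \<in> Irr G" for \<chi>
    using gal_act_Irr[OF fin assms(4,5)[unfolded assms(3)] that x] unfolding y_def by simp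
  have xy: "x \<notin> conj_class G y" using conj_class_eq[OF x y] assms(13) unfolding y_def by auto
  have "X \<subseteq> Irr G" unfolding X_def by auto
  moreover have "finite X" unfolding X_def assms(8) by simp
  moreover have "\<chi> y = \<chi> x" if "\<chi> \<in> Irr G" "\<chi> \<notin> X" for \<chi>
    using gal[OF that(1)] that unfolding X_def by simp
  ultimately have "(\<Sum>\<psi>\<in>X. \<psi> x * cnj (\<psi> x - \<psi> y)) = of_nat (card (centralizer G x))"
    by (rule card_centralizer_eq_sum_over_separating_characters[OF fin _ _ x y xy])
  moreover have "(\<Sum>\<psi>\<in>X. \<psi> x * cnj (\<psi> x - \<psi> y)) =
      of_real ((cmod (\<chi>1 x - gal_act G \<sigma> \<chi>1 x))\<^sup>2 + (cmod (\<chi>2 x - gal_act G \<sigma> \<chi>2 x))\<^sup>2)"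
  proof -
    have "gal_act G \<sigma> \<chi>1 \<in> Irr G" "gal_act G \<sigma> \<chi>2 \<in> Irr G" using assms(8) by blast+
    then show ?thesis unfolding X_def assms(8) using assms(6-11)
      by (intro sum_swapped_pairs_eq_norm_squares) (auto simp: gal)
  qed
  ultimately show ?thesis by (metis of_real_eq_iff of_real_of_nat_eq)
qed

end
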